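(* Let $X_1,\dots,X_n$ be i.i.d. random vectors in $\mathbb{R}^p$ with mean $0$ and covariance matrix $\Sigma\neq0$, in the asymptotic regime $n\to\infty$, $p=p_n$. Let $\hat\Sigma=n^{-1}\sum_{i=1}^nX_iX_i^T$, $\hat f=(\mathrm{tr}(\hat\Sigma^2))^{1/2}$, $f=(\mathrm{tr}(\Sigma^2))^{1/2}$. (i) If $\mathbb{E}[(X_1^TX_1)^2]=o(nf^2)$, then $\mathbb{E}|\hat\Sigma/\hat f-\Sigma/f|_F^2=o(1)$, and consequently $\rho(\hat\Sigma/\hat f-\Sigma/f)=o_{\mathbb{P}}(1)$. (ii) If $nf^2=o(\mathbb{E}[(X_1^TX_1)^2])$, $K_2=O(n^{3/4})$, and $\mathbb{E}[(X_1^TX_2)^4]=o(\{\mathbb{E}[(X_1^TX_1)^2]\}^2)$, then $\rho(\hat\Sigma/\hat f)=o_{\mathbb{P}}(1)$, and $\rho(\hat\Sigma/\hat f-\Sigma/f)=o_{\mathbb{P}}(1)$ holds if and only if $\rho(\Sigma)=o(f)$.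
   Context: $|A|_F$ is the Frobenius norm and $\rho(A)$ the spectral norm of a matrix $A$. $f_1=\mathrm{tr}(\Sigma)$ and $K_2^4=\mathbb{E}|(X_1^TX_1-f_1)/f|^4$. *)

theory Defs
  imports "HOL-Probability.Probability" "HOL-Library.Landau_Symbols"
begin

text \<open>Vectors in R^d are functions nat => real (only indices < d matter);
  d x d matrices are functions nat => nat => real (only indices < d matter).\<close>

definition vdot :: "nat \<Rightarrow> (nat \<Rightarrow> real) \<Rightarrow> (nat \<Rightarrow> real) \<Rightarrow> real" where
  "vdot d x y = (\<Sum>j<d. x j * y j)"

definition mtrace :: "nat \<Rightarrow> (nat \<Rightarrow> nat \<Rightarrow> real) \<Rightarrow> real" where
  "mtrace d A = (\<Sum>i<d. A i i)"

definition mmult :: "nat \<Rightarrow> (nat \<Rightarrow> nat \<Rightarrow> real) \<Rightarrow> (nat \<Rightarrow> nat \<Rightarrow> real) \<Rightarrow> nat \<Rightarrow> nat \<Rightarrow> real" where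
  "mmult d A B i k = (\<Sum>j<d. A i j * B j k)"

definition frob :: "nat \<Rightarrow> (nat \<Rightarrow> nat \<Rightarrow> real) \<Rightarrow> real" where
  "frob d A = sqrt (\<Sum>i<d. \<Sum>j<d. (A i j)\<^sup>2)"

definition specnorm :: "nat \<Rightarrow> (nat \<Rightarrow> nat \<Rightarrow> real) \<Rightarrow> real" where
  "specnorm d A = Sup {sqrt (\<Sum>i<d. (\<Sum>j<d. A i j * x j)\<^sup>2) | x. (\<Sum>j<d. (x j)\<^sup>2) = 1}"

definition sample_cov :: "nat \<Rightarrow> (nat \<Rightarrow> 'a \<Rightarrow> nat \<Rightarrow> real) \<Rightarrow> 'a \<Rightarrow> nat \<Rightarrow> nat \<Rightarrow> real" where
  "sample_cov n Xs \<omega> j k = (\<Sum>i<n. Xs i \<omega> j * Xs i \<omega> k) / real n"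

definition fnorm :: "nat \<Rightarrow> (nat \<Rightarrow> nat \<Rightarrow> real) \<Rightarrow> real" where
  "fnorm d A = sqrt (mtrace d (mmult d A A))"

definition norm_diff :: "nat \<Rightarrow> nat \<Rightarrow> (nat \<Rightarrow> 'a \<Rightarrow> nat \<Rightarrow> real) \<Rightarrow> (nat \<Rightarrow> nat \<Rightarrow> real) \<Rightarrow> 'a \<Rightarrow> nat \<Rightarrow> nat \<Rightarrow> real" where
  "norm_diff d n Xs S \<omega> j k =
     sample_cov n Xs \<omega> j k / fnorm d (sample_cov n Xs \<omega>) - S j k / fnorm d S"

definition conv_prob_zero :: "(nat \<Rightarrow> 'a measure) \<Rightarrow> (nat \<Rightarrow> 'a \<Rightarrow> real) \<Rightarrow> bool" where
  "conv_prob_zero M Y \<longleftrightarrow>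
     (\<forall>e>0. (\<lambda>n. measure (M n) {\<omega> \<in> space (M n). \<bar>Y n \<omega>\<bar> > e}) \<longlonglongrightarrow> 0)"

abbreviation vecspace :: "nat \<Rightarrow> (nat \<Rightarrow> real) measure" where
  "vecspace d \<equiv> PiM {..<d} (\<lambda>_. borel)"

text \<open>The model: for every n \<ge> 1, on a probability space M n, X n 0, ..., X n (n-1) are
  i.i.d. random vectors in R^(p n) with mean 0 and covariance matrix S n \<noteq> 0.\<close>
definition iid_model ::
  "(nat \<Rightarrow> 'a measure) \<Rightarrow> (nat \<Rightarrow> nat) \<Rightarrow> (nat \<Rightarrow> nat \<Rightarrow> 'a \<Rightarrow> nat \<Rightarrow> real)
     \<Rightarrow> (nat \<Rightarrow> nat \<Rightarrow> nat \<Rightarrow> real) \<Rightarrow> bool" where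
  "iid_model M p X S \<longleftrightarrow> (\<forall>n>0.
     prob_space (M n) \<and>
     (\<forall>i<n. (\<lambda>\<omega>. restrict (X n i \<omega>) {..<p n}) \<in> M n \<rightarrow>\<^sub>M vecspace (p n)) \<and>
     prob_space.indep_vars (M n) (\<lambda>_. vecspace (p n))
        (\<lambda>i \<omega>. restrict (X n i \<omega>) {..<p n}) {..<n} \<and>
     (\<forall>i<n. distr (M n) (vecspace (p n)) (\<lambda>\<omega>. restrict (X n i \<omega>) {..<p n})
            = distr (M n) (vecspace (p n)) (\<lambda>\<omega>. restrict (X n 0 \<omega>) {..<p n})) \<and>
     (\<forall>j<p n. integrable (M n) (\<lambda>\<omega>. (X n 0 \<omega> j)\<^sup>2)) \<and>
     (\<forall>j<p n. integral\<^sup>L (M n) (\<lambda>\<omega>. X n 0 \<omega> j) = 0) \<and>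
     (\<forall>j<p n. \<forall>k<p n. S n j k = integral\<^sup>L (M n) (\<lambda>\<omega>. X n 0 \<omega> j * X n 0 \<omega> k)) \<and>
     (\<exists>j<p n. \<exists>k<p n. S n j k \<noteq> 0))"

end

theory Submission
  imports Defs
begin

(* Writing T_i = X_i^T X_i and f = |S|_F, the proof rests on three elementary facts:
   - Normalisation is 2-Lipschitz: |u/|u| - v/|v||_F <= 2 |u - v|_F / |v|_F, and every
     entry of Shat has mean square error at most E (X_j X_k)^2 / n.  Summing gives
     E |Shat/fhat - S/f|_F^2 <= 4 E T^2 / (n f^2), which is part (i) (rho <= |.|_F, Markov).
   - For fixed vectors, rho(Shat) <= (max_i T_i + |offdiagonal Gram part|_F) / n, while
     |Shat|_F >= (sum_i T_i^2)^(1/2) / n.  Chebyshev and Markov control sum_i T_i^2 (from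
     below by n E T^2 / 2), max_i T_i (via E T^4) and the off-diagonal Gram mass
     (E (X_i^T X_l)^2 = f^2 for i <> l); under n f^2 = o(E T^2) and K_2 = O(n^(3/4)) this
     gives rho(Shat/fhat) ->P 0. *)

definition matvec :: "nat \<Rightarrow> (nat \<Rightarrow> nat \<Rightarrow> real) \<Rightarrow> (nat \<Rightarrow> real) \<Rightarrow> nat \<Rightarrow> real" where
  "matvec d A x i = (\<Sum>j<d. A i j * x j)"

lemma L2_set_scale: "L2_set (\<lambda>i. c * f i) A = \<bar>c\<bar> * L2_set f A"
  unfolding L2_set_def
  by (simp add: power_mult_distrib real_sqrt_mult flip: sum_distrib_left)

lemma L2_set_divide: "L2_set (\<lambda>i. f i / c) A = L2_set f A / \<bar>c\<bar>"
  using L2_set_scale[of "1 / c" f A] by (simp add: divide_inverse mult.commute abs_inverse)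

lemma L2_set_diff_commute: "L2_set (\<lambda>i. v i - u i) I = L2_set (\<lambda>i. u i - v i) I"
  unfolding L2_set_def by (simp add: power2_commute)

lemma L2_set_squared: "(L2_set f A)\<^sup>2 = (\<Sum>i\<in>A. (f i)\<^sup>2)"
  unfolding L2_set_def by (simp add: sum_nonneg)

lemma inner_abs_le_L2_set: "\<bar>\<Sum>i\<in>A. f i * g i\<bar> \<le> L2_set f A * L2_set g A"
proof -
  have "\<bar>\<Sum>i\<in>A. f i * g i\<bar> \<le> (\<Sum>i\<in>A. \<bar>f i\<bar> * \<bar>g i\<bar>)"
    by (metis (no_types, lifting) abs_mult sum.cong sum_abs)
  also have "\<dots> \<le> L2_set f A * L2_set g A" by (rule L2_set_mult_ineq)
  finally show ?thesis .
qed

lemma inner_le_L2_set: "(\<Sum>i\<in>A. f i * g i) \<le> L2_set f A * L2_set g A"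
  using inner_abs_le_L2_set[of f g A] by linarith

lemma frob_nested_L2_set: "frob d A = L2_set (\<lambda>i. L2_set (A i) {..<d}) {..<d}"
  unfolding frob_def L2_set_def by (simp add: sum_nonneg)

lemma frob_nonneg: "0 \<le> frob d A"
  unfolding frob_nested_L2_set by simp

lemma frob_pair_L2_set: "frob d A = L2_set (\<lambda>p. A (fst p) (snd p)) ({..<d} \<times> {..<d})"
  unfolding frob_def L2_set_def by (simp add: sum.cartesian_product case_prod_beta')

lemma fnorm_eq_frob_if_symmetric:
  "(\<And>j k. j < d \<Longrightarrow> k < d \<Longrightarrow> A j k = A k j) \<Longrightarrow> fnorm d A = frob d A"
  unfolding fnorm_def frob_def mtrace_def mmult_def
  by (intro arg_cong[where f=sqrt] sum.cong refl) (simp add: power2_eq_square)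

(* |A x| <= |A|_F |x|, by Cauchy-Schwarz in every row. *)
lemma matvec_L2_le_frob: "L2_set (matvec d A x) {..<d} \<le> frob d A * L2_set x {..<d}"
proof -
  have "L2_set (matvec d A x) {..<d} = L2_set (\<lambda>i. \<bar>matvec d A x i\<bar>) {..<d}"
    unfolding L2_set_def by simp
  also have "\<dots> \<le> L2_set (\<lambda>i. L2_set x {..<d} * L2_set (A i) {..<d}) {..<d}"
  proof (rule L2_set_mono)
    fix i show "\<bar>matvec d A x i\<bar> \<le> L2_set x {..<d} * L2_set (A i) {..<d}"
      unfolding matvec_def using inner_abs_le_L2_set[of "A i" x "{..<d}"] by (simp add: mult.commute)
  qed simp
  also have "\<dots> = L2_set x {..<d} * frob d A"
    by (simp add: L2_set_scale frob_nested_L2_set)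
  finally show ?thesis by (simp add: mult.commute)
qed

lemma specnorm_as_Sup:
  "specnorm d A = Sup {L2_set (matvec d A x) {..<d} | x. L2_set x {..<d} = 1}"
  unfolding specnorm_def L2_set_def matvec_def by simp

(* The unit-sphere image is nonempty (d > 0) and bounded by |A|_F, so rho(A) is a genuine
   supremum: it bounds every |A x| with |x| = 1 and is the least such bound. *)
lemma first_unit_vector: "0 < (d::nat) \<Longrightarrow> L2_set (\<lambda>j. if j = 0 then 1 else 0) {..<d} = 1"
proof -
  have "(\<Sum>j<d. ((\<lambda>j::nat. if j = 0 then 1 else 0::real) j)\<^sup>2) = (\<Sum>j<d. (if j = 0 then 1 else 0))"
    by (intro sum.cong) auto
  also assume "0 < d"
  hence "(\<Sum>j<d. (if j = 0 then 1 else 0::real)) = 1" by (simp add: sum.delta)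
  finally show ?thesis unfolding L2_set_def by simp
qed

lemma specnorm_set_nonempty:
  "0 < d \<Longrightarrow> {L2_set (matvec d A x) {..<d} | x. L2_set x {..<d} = 1} \<noteq> {}"
  using first_unit_vector by blast

lemma specnorm_set_bdd: "bdd_above {L2_set (matvec d A x) {..<d} | x. L2_set x {..<d} = 1}"
proof (rule bdd_aboveI)
  fix y assume "y \<in> {L2_set (matvec d A x) {..<d} | x. L2_set x {..<d} = 1}"
  then obtain x where "y = L2_set (matvec d A x) {..<d}" "L2_set x {..<d} = 1" by blast
  thus "y \<le> frob d A" using matvec_L2_le_frob[of d A x] by simp
qed

lemma specnorm_upper:
  "0 < d \<Longrightarrow> L2_set x {..<d} = 1 \<Longrightarrow> L2_set (matvec d A x) {..<d} \<le> specnorm d A"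
  unfolding specnorm_as_Sup by (rule cSup_upper) (use specnorm_set_bdd in auto)

lemma specnorm_least:
  "0 < d \<Longrightarrow> (\<And>x. L2_set x {..<d} = 1 \<Longrightarrow> L2_set (matvec d A x) {..<d} \<le> c)
     \<Longrightarrow> specnorm d A \<le> c"
  unfolding specnorm_as_Sup by (rule cSup_least) (use specnorm_set_nonempty in auto)

lemma specnorm_nonneg: "0 < d \<Longrightarrow> 0 \<le> specnorm d A"
  using specnorm_upper[OF _ first_unit_vector, of d A] L2_set_nonneg[of "matvec d A _"]
  by (meson order_trans)

lemma specnorm_le_frob: assumes "0 < d" shows "specnorm d A \<le> frob d A"
proof (rule specnorm_least[OF assms])
  fix x assume "L2_set x {..<d} = 1"
  then show "L2_set (matvec d A x) {..<d} \<le> frob d A" using matvec_L2_le_frob[of d A x] by simp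
qed

lemma specnorm_lincomb:
  assumes d: "0 < d" and C: "\<And>j k. C j k = a * A j k + b * B j k"
  shows "specnorm d C \<le> \<bar>a\<bar> * specnorm d A + \<bar>b\<bar> * specnorm d B"
proof (rule specnorm_least[OF d])
  fix x assume x: "L2_set x {..<d} = 1"
  have "matvec d C x = (\<lambda>i. a * matvec d A x i + b * matvec d B x i)"
    by (auto simp: matvec_def C sum.distrib sum_distrib_left algebra_simps)
  hence "L2_set (matvec d C x) {..<d}
      \<le> L2_set (\<lambda>i. a * matvec d A x i) {..<d} + L2_set (\<lambda>i. b * matvec d B x i) {..<d}"
    using L2_set_triangle_ineq by simp
  also have "\<dots> \<le> \<bar>a\<bar> * specnorm d A + \<bar>b\<bar> * specnorm d B"
    unfolding L2_set_scale by (intro add_mono mult_left_mono specnorm_upper[OF d x]) auto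
  finally show "L2_set (matvec d C x) {..<d} \<le> \<bar>a\<bar> * specnorm d A + \<bar>b\<bar> * specnorm d B" .
qed

lemma specnorm_divide:
  assumes d: "0 < d" and f: "0 < f"
  shows "specnorm d (\<lambda>j k. R j k / f) = specnorm d R / f"
proof (rule antisym)
  have "specnorm d (\<lambda>j k. R j k / f) \<le> \<bar>1 / f\<bar> * specnorm d R + \<bar>0\<bar> * specnorm d R"
    by (rule specnorm_lincomb[OF d]) simp
  thus "specnorm d (\<lambda>j k. R j k / f) \<le> specnorm d R / f" using f by simp
  have "specnorm d R \<le> \<bar>f\<bar> * specnorm d (\<lambda>j k. R j k / f) + \<bar>0\<bar> * specnorm d R"
    by (rule specnorm_lincomb[OF d]) (use f in simp)
  thus "specnorm d R / f \<le> specnorm d (\<lambda>j k. R j k / f)" using f by (simp add: field_simps)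
qed

lemma specnorm_diff_triangle:
  assumes d: "0 < d" and f: "0 < f"
  shows "specnorm d (\<lambda>j k. P j k - R j k / f) \<le> specnorm d P + specnorm d R / f"
    and "specnorm d R / f \<le> specnorm d P + specnorm d (\<lambda>j k. P j k - R j k / f)"
proof -
  have "specnorm d (\<lambda>j k. P j k - R j k / f)
      \<le> \<bar>1\<bar> * specnorm d P + \<bar>-1\<bar> * specnorm d (\<lambda>j k. R j k / f)"
    by (rule specnorm_lincomb[OF d]) simp
  thus "specnorm d (\<lambda>j k. P j k - R j k / f) \<le> specnorm d P + specnorm d R / f"
    using specnorm_divide[OF d f] by simp
  have "specnorm d (\<lambda>j k. R j k / f)
      \<le> \<bar>1\<bar> * specnorm d P + \<bar>-1\<bar> * specnorm d (\<lambda>j k. P j k - R j k / f)"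
    by (rule specnorm_lincomb[OF d]) simp
  thus "specnorm d R / f \<le> specnorm d P + specnorm d (\<lambda>j k. P j k - R j k / f)"
    using specnorm_divide[OF d f] by simp
qed

lemma L2_set_normalized_diff:
  assumes fin: "finite I" and pos: "L2_set v I > 0"
  shows "L2_set (\<lambda>i. u i / L2_set u I - v i / L2_set v I) I \<le> 2 * L2_set (\<lambda>i. u i - v i) I / L2_set v I"
proof -
  define nu nv e where "nu = L2_set u I" and "nv = L2_set v I" and "e = L2_set (\<lambda>i. u i - v i) I"
  have nvp: "nv > 0" using pos nv_def by simp
  have reverse_triangle: "\<bar>nv - nu\<bar> \<le> e"
  proof -
    have "nu \<le> e + nv"
      using L2_set_triangle_ineq[of "\<lambda>i. u i - v i" v I] unfolding nu_def e_def nv_def by simp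
    moreover have "nv \<le> e + nu"
      using L2_set_triangle_ineq[of "\<lambda>i. v i - u i" u I] L2_set_diff_commute[of v u I]
      unfolding nu_def e_def nv_def by simp
    ultimately show ?thesis by linarith
  qed
  show ?thesis
  proof (cases "nu = 0")
    case True
    hence u0: "\<forall>i\<in>I. u i = 0" using L2_set_eq_0_iff[OF fin] nu_def by auto
    have "L2_set (\<lambda>i. u i / L2_set u I - v i / L2_set v I) I = L2_set (\<lambda>i. (- 1 / nv) * v i) I"
      by (rule L2_set_cong) (auto simp: u0 nv_def)
    also have "\<dots> = 1" unfolding L2_set_scale using nvp by (simp add: nv_def)
    also have "1 \<le> 2 * e / nv" using reverse_triangle True nvp by simp
    finally show ?thesis unfolding e_def nv_def .
  next
    case False
    hence nup: "nu > 0" using nu_def by (simp add: order_less_le)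
    have "L2_set (\<lambda>i. u i / L2_set u I - v i / L2_set v I) I
          = L2_set (\<lambda>i. (1 / nv) * (u i - v i) + (1 / nu - 1 / nv) * u i) I"
      using nup nvp unfolding nu_def nv_def by (intro L2_set_cong) (auto simp: field_simps)
    also have "\<dots> \<le> L2_set (\<lambda>i. (1 / nv) * (u i - v i)) I + L2_set (\<lambda>i. (1 / nu - 1 / nv) * u i) I"
      by (rule L2_set_triangle_ineq)
    also have "\<dots> = e / nv + \<bar>nv - nu\<bar> / nv"
      unfolding L2_set_scale using nvp nup
      by (simp add: e_def flip: nu_def) (simp add: field_simps abs_divide)
    also have "\<dots> \<le> 2 * e / nv"
      using reverse_triangle nvp by (simp add: divide_right_mono flip: add_divide_distrib)
    finally show ?thesis unfolding e_def nv_def .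
  qed
qed

(* Measurability of the spectral norm.  The supremum defining rho(A) can be taken over
   the countable set of vectors with rational coordinates. *)

definition rational_vectors :: "nat \<Rightarrow> (nat \<Rightarrow> real) set" where
  "rational_vectors d = PiE {..<d} (\<lambda>_. \<rat>)"

lemma countable_rational_vectors: "countable (rational_vectors d)"
  unfolding rational_vectors_def by (intro countable_PiE) (auto simp: countable_rat)

lemma rational_vectors_dense:
  assumes d: "0 < d" and \<delta>: "0 < \<delta>"
  obtains q where "q \<in> rational_vectors d" "L2_set (\<lambda>j. x j - q j) {..<d} < \<delta>"
proof -
  have "\<forall>j. \<exists>r\<in>\<rat>. x j - \<delta> / d < r \<and> r < x j + \<delta> / d"
    using \<delta> d by (intro allI Rats_dense_in_real) auto
  then obtain r where r: "\<And>j. r j \<in> \<rat> \<and> x j - \<delta> / d < r j \<and> r j < x j + \<delta> / d" by metis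
  define q where "q = restrict r {..<d}"
  have "L2_set (\<lambda>j. x j - q j) {..<d} \<le> (\<Sum>j<d. \<bar>x j - q j\<bar>)" by (rule L2_set_le_sum_abs)
  also have "\<dots> < (\<Sum>j<d. \<delta> / d)"
  proof (intro sum_strict_mono)
    fix j assume "j \<in> {..<d}"
    thus "\<bar>x j - q j\<bar> < \<delta> / real d" using r[of j] by (auto simp: q_def abs_less_iff)
  qed (use d in auto)
  also have "\<dots> = \<delta>" using d by simp
  finally show ?thesis using that[of q] r unfolding rational_vectors_def q_def by auto
qed

lemma matvec_diff: "matvec d A x i - matvec d A y i = matvec d A (\<lambda>j. x j - y j) i"
  by (simp add: matvec_def sum_subtractf right_diff_distrib)

lemma matvec_L2_perturb:
  "L2_set (matvec d A x) {..<d} - frob d A * L2_set (\<lambda>j. x j - q j) {..<d} \<le> L2_set (matvec d A q) {..<d}"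
proof -
  have "L2_set (matvec d A x) {..<d} = L2_set (\<lambda>i. matvec d A q i + matvec d A (\<lambda>j. x j - q j) i) {..<d}"
    by (intro L2_set_cong refl) (metis add_diff_cancel_left' diff_add_cancel matvec_diff)
  also have "\<dots> \<le> L2_set (matvec d A q) {..<d} + L2_set (matvec d A (\<lambda>j. x j - q j)) {..<d}"
    by (rule L2_set_triangle_ineq)
  finally show ?thesis using matvec_L2_le_frob[of d A "\<lambda>j. x j - q j"] by linarith
qed

lemma specnorm_gt_of_vector:
  assumes d: "0 < d" and q: "t * L2_set q {..<d} < L2_set (matvec d A q) {..<d}"
  shows "t < specnorm d A"
proof -
  have qpos: "L2_set q {..<d} > 0"
    using q matvec_L2_le_frob[of d A q] L2_set_nonneg[of q "{..<d}"]
    by (metis less_eq_real_def mult_zero_left mult_zero_right not_less)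
  define x where "x j = (1 / L2_set q {..<d}) * q j" for j
  have x1: "L2_set x {..<d} = 1" unfolding x_def L2_set_scale using qpos by simp
  have "matvec d A x = (\<lambda>i. (1 / L2_set q {..<d}) * matvec d A q i)"
    by (auto simp: matvec_def x_def sum_distrib_left mult_ac)
  hence "L2_set (matvec d A x) {..<d} = L2_set (matvec d A q) {..<d} / L2_set q {..<d}"
    using qpos by (simp add: L2_set_divide)
  moreover have "t < L2_set (matvec d A q) {..<d} / L2_set q {..<d}"
    using q qpos by (simp add: field_simps)
  ultimately show "t < specnorm d A" using specnorm_upper[OF d x1, of A] by linarith
qed

(* Conversely, for t >= 0 a rational vector close to a near-maximising unit vector
   certifies t < rho(A). *)
lemma rational_witness_of_specnorm_gt:
  assumes d: "0 < d" and t: "0 \<le> t" and gt: "t < specnorm d A"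
  shows "\<exists>q\<in>rational_vectors d. t * L2_set q {..<d} < L2_set (matvec d A q) {..<d}"
proof -
  obtain x where x: "L2_set x {..<d} = 1" and s: "t < L2_set (matvec d A x) {..<d}"
    using gt unfolding specnorm_as_Sup less_cSup_iff[OF specnorm_set_nonempty[OF d] specnorm_set_bdd]
    by blast
  define s F where "s = L2_set (matvec d A x) {..<d}" and "F = frob d A"
  have F0: "0 \<le> F" unfolding F_def by (rule frob_nonneg)
  define \<delta> where "\<delta> = (s - t) / (2 * (t + F + 1))"
  have \<delta>p: "\<delta> > 0" unfolding \<delta>_def using s t F0 s_def by simp
  obtain q where qQ: "q \<in> rational_vectors d" and close: "L2_set (\<lambda>j. x j - q j) {..<d} < \<delta>"
    using rational_vectors_dense[OF d \<delta>p] .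
  have qn: "L2_set q {..<d} \<le> 1 + \<delta>"
    using L2_set_triangle_ineq[of x "\<lambda>j. q j - x j" "{..<d}"] L2_set_diff_commute[of q x] x close
    by simp
  have Aq: "s - F * \<delta> \<le> L2_set (matvec d A q) {..<d}"
    using matvec_L2_perturb[of d A x q] mult_left_mono[OF less_imp_le[OF close] F0]
    unfolding s_def F_def by linarith
  have "t * L2_set q {..<d} \<le> t * (1 + \<delta>)" using qn t by (simp add: mult_left_mono)
  also have "t * (1 + \<delta>) < s - F * \<delta>"
  proof -
    have "\<delta> * (t + F + 1) = (s - t) / 2"
      using t F0 unfolding \<delta>_def by (simp add: field_simps)
    hence "s - F * \<delta> - t * (1 + \<delta>) = \<delta> * (t + F + 2)" by (simp add: algebra_simps)
    moreover have "0 < \<delta> * (t + F + 2)" using \<delta>p t F0 by simp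
    ultimately show ?thesis by linarith
  qed
  finally show ?thesis using Aq qQ by (meson less_le_trans)
qed

(* Hence {rho(A) > t} is a countable union of events, for t >= 0. *)
lemma specnorm_gt_iff_rational:
  assumes d: "0 < d" and t: "0 \<le> t"
  shows "t < specnorm d A \<longleftrightarrow>
    (\<exists>q\<in>rational_vectors d. t * L2_set q {..<d} < L2_set (matvec d A q) {..<d})"
  using rational_witness_of_specnorm_gt[OF d t] specnorm_gt_of_vector[OF d] by blast

lemma specnorm_measurable:
  assumes d: "0 < d"
    and meas: "\<And>j k. j < d \<Longrightarrow> k < d \<Longrightarrow> (\<lambda>\<omega>. A \<omega> j k) \<in> borel_measurable M"
  shows "(\<lambda>\<omega>. specnorm d (A \<omega>)) \<in> borel_measurable M"
  unfolding borel_measurable_iff_greater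
proof
  fix t :: real
  show "{w \<in> space M. t < specnorm d (A w)} \<in> sets M"
  proof (cases "t < 0")
    case True
    hence "{w \<in> space M. t < specnorm d (A w)} = space M"
      using specnorm_nonneg[OF d] by (auto intro: less_le_trans)
    thus ?thesis by simp
  next
    case False
    have matvec_meas: "(\<lambda>w. L2_set (matvec d (A w) q) {..<d}) \<in> borel_measurable M" for q
      unfolding L2_set_def matvec_def using meas by measurable
    have "{w \<in> space M. t < specnorm d (A w)} = (\<Union>q\<in>rational_vectors d.
            {w \<in> space M. t * L2_set q {..<d} < L2_set (matvec d (A w) q) {..<d}})"
      using specnorm_gt_iff_rational[OF d] False by auto
    also have "\<dots> \<in> sets M"
      using matvec_meas by (intro sets.countable_UN'' countable_rational_vectors) measurable
    finally show ?thesis .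
  qed
qed

(* Sample covariance scov = n^-1 sum_i xs_i xs_i^T of n fixed vectors xs 0, ..., xs (n-1) in R^d,
   and their Gram matrix gram i l = xs_i^T xs_l, which has the same nonzero spectrum up to 1/n. *)
definition gram :: "nat \<Rightarrow> (nat \<Rightarrow> nat \<Rightarrow> real) \<Rightarrow> nat \<Rightarrow> nat \<Rightarrow> real" where
  "gram d xs i l = (\<Sum>j<d. xs i j * xs l j)"

definition scov :: "nat \<Rightarrow> (nat \<Rightarrow> nat \<Rightarrow> real) \<Rightarrow> nat \<Rightarrow> nat \<Rightarrow> real" where
  "scov n xs j k = (\<Sum>i<n. xs i j * xs i k) / real n"

lemma sample_cov_eq_scov: "sample_cov n Xs \<omega> = scov n (\<lambda>i. Xs i \<omega>)"
  by (simp add: fun_eq_iff sample_cov_def scov_def)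

lemma scov_symmetric: "scov n xs j k = scov n xs k j"
  by (simp add: scov_def mult.commute)

lemma gram_diag_nonneg: "0 \<le> gram d xs i i"
  unfolding gram_def by (simp add: sum_nonneg)

lemma sum4_swap:
  "(\<Sum>j\<in>J. \<Sum>k\<in>K. \<Sum>i\<in>I. \<Sum>l\<in>L. F i l j k) = (\<Sum>i\<in>I. \<Sum>l\<in>L. \<Sum>j\<in>J. \<Sum>k\<in>K. F i l j k)"
proof -
  have "(\<Sum>j\<in>J. \<Sum>k\<in>K. \<Sum>i\<in>I. \<Sum>l\<in>L. F i l j k) = (\<Sum>j\<in>J. \<Sum>i\<in>I. \<Sum>k\<in>K. \<Sum>l\<in>L. F i l j k)"
    by (intro sum.cong refl) (rule sum.swap)
  also have "\<dots> = (\<Sum>j\<in>J. \<Sum>i\<in>I. \<Sum>l\<in>L. \<Sum>k\<in>K. F i l j k)"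
    by (intro sum.cong refl) (rule sum.swap)
  also have "\<dots> = (\<Sum>i\<in>I. \<Sum>j\<in>J. \<Sum>l\<in>L. \<Sum>k\<in>K. F i l j k)"
    by (rule sum.swap)
  also have "\<dots> = (\<Sum>i\<in>I. \<Sum>l\<in>L. \<Sum>j\<in>J. \<Sum>k\<in>K. F i l j k)"
    by (intro sum.cong refl) (rule sum.swap)
  finally show ?thesis .
qed

lemma scov_frob_sq:
  "(\<Sum>j<d. \<Sum>k<d. (scov n xs j k)\<^sup>2) = (\<Sum>i<n. \<Sum>l<n. (gram d xs i l)\<^sup>2) / (real n)\<^sup>2"
proof -
  have "(\<Sum>j<d. \<Sum>k<d. (\<Sum>i<n. xs i j * xs i k)\<^sup>2)
      = (\<Sum>j<d. \<Sum>k<d. \<Sum>i<n. \<Sum>l<n. (xs i j * xs l j) * (xs i k * xs l k))"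
    by (simp add: power2_eq_square sum_product mult_ac)
  also have "\<dots> = (\<Sum>i<n. \<Sum>l<n. \<Sum>j<d. \<Sum>k<d. (xs i j * xs l j) * (xs i k * xs l k))"
    by (rule sum4_swap)
  also have "\<dots> = (\<Sum>i<n. \<Sum>l<n. (gram d xs i l)\<^sup>2)"
    by (simp add: gram_def power2_eq_square sum_product)
  finally show ?thesis
    by (simp add: scov_def power_divide flip: sum_divide_distrib)
qed

lemma fnorm_scov: "fnorm d (scov n xs) = sqrt (\<Sum>i<n. \<Sum>l<n. (gram d xs i l)\<^sup>2) / real n"
proof -
  have "fnorm d (scov n xs) = frob d (scov n xs)"
    by (rule fnorm_eq_frob_if_symmetric) (rule scov_symmetric)
  thus ?thesis unfolding frob_def scov_frob_sq by (simp add: real_sqrt_divide)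
qed

lemma offdiag_quadratic_form_le:
  fixes G :: "nat \<Rightarrow> nat \<Rightarrow> real"
  assumes offdiag: "(\<Sum>i<n. \<Sum>l<n. if i = l then 0 else (G i l)\<^sup>2) \<le> \<beta>\<^sup>2" and \<beta>: "0 \<le> \<beta>"
  shows "(\<Sum>i<n. \<Sum>l<n. a i * a l * (if i = l then 0 else G i l)) \<le> \<beta> * (\<Sum>i<n. (a i)\<^sup>2)"
proof -
  define A where "A = (\<Sum>i<n. (a i)\<^sup>2)"
  define P where "P = {..<n} \<times> {..<n}"
  define H where "H p = (if fst p = snd p then 0 else G (fst p) (snd p))" for p
  have A0: "0 \<le> A" unfolding A_def by (simp add: sum_nonneg)
  have "L2_set (\<lambda>p. a (fst p) * a (snd p)) P = A"
  proof -
    have "(\<Sum>p\<in>P. (a (fst p) * a (snd p))\<^sup>2) = A\<^sup>2"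
      unfolding P_def A_def
      by (simp add: power2_eq_square sum_product mult_ac sum.cartesian_product case_prod_beta')
    thus ?thesis unfolding L2_set_def using A0 by simp
  qed
  moreover have "L2_set H P \<le> \<beta>"
  proof -
    have "(\<Sum>p\<in>P. (H p)\<^sup>2) = (\<Sum>i<n. \<Sum>l<n. if i = l then 0 else (G i l)\<^sup>2)"
      unfolding P_def sum.cartesian_product H_def by (intro sum.cong refl) auto
    hence "L2_set H P = sqrt (\<Sum>i<n. \<Sum>l<n. if i = l then 0 else (G i l)\<^sup>2)"
      unfolding L2_set_def by (simp only:)
    also have "\<dots> \<le> sqrt (\<beta>\<^sup>2)" using offdiag by (rule real_sqrt_le_mono)
    also have "\<dots> = \<beta>" using \<beta> by simp
    finally show ?thesis .
  qed
  ultimately have "L2_set (\<lambda>p. a (fst p) * a (snd p)) P * L2_set H P \<le> A * \<beta>"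
    using A0 by (simp add: mult_left_mono)
  moreover have "(\<Sum>i<n. \<Sum>l<n. a i * a l * (if i = l then 0 else G i l))
      = (\<Sum>p\<in>P. a (fst p) * a (snd p) * H p)"
    unfolding P_def sum.cartesian_product H_def by (simp add: case_prod_beta')
  ultimately show ?thesis
    using inner_le_L2_set[of "\<lambda>p. a (fst p) * a (snd p)" H P] unfolding A_def by (simp add: mult.commute)
qed

lemma quadratic_form_le_diag_offdiag:
  fixes G :: "nat \<Rightarrow> nat \<Rightarrow> real"
  assumes diag: "\<And>i. i < n \<Longrightarrow> G i i \<le> \<alpha>"
    and offdiag: "(\<Sum>i<n. \<Sum>l<n. if i = l then 0 else (G i l)\<^sup>2) \<le> \<beta>\<^sup>2" and \<beta>: "0 \<le> \<beta>"
  shows "(\<Sum>i<n. \<Sum>l<n. a i * a l * G i l) \<le> (\<alpha> + \<beta>) * (\<Sum>i<n. (a i)\<^sup>2)"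
proof -
  have row: "(\<Sum>l<n. a i * a l * G i l)
      = (a i)\<^sup>2 * G i i + (\<Sum>l<n. a i * a l * (if i = l then 0 else G i l))" if "i < n" for i
  proof -
    have "(\<Sum>l<n. a i * a l * G i l) = (\<Sum>l<n. if i = l then a i * a l * G i l else 0)
        + (\<Sum>l<n. a i * a l * (if i = l then 0 else G i l))"
      by (simp only: sum.distrib[symmetric]) (intro sum.cong refl, simp)
    thus ?thesis using that by (simp add: sum.delta power2_eq_square)
  qed
  have "(\<Sum>i<n. (a i)\<^sup>2 * G i i) \<le> \<alpha> * (\<Sum>i<n. (a i)\<^sup>2)"
    unfolding sum_distrib_left by (intro sum_mono) (simp add: diag mult.commute mult_right_mono)
  thus ?thesis
    using offdiag_quadratic_form_le[OF offdiag \<beta>, of a] row by (simp add: sum.distrib algebra_simps)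
qed

lemma scov_matvec_gram_form:
  fixes xs :: "nat \<Rightarrow> nat \<Rightarrow> real" and x :: "nat \<Rightarrow> real" and d n :: nat
  defines "a \<equiv> \<lambda>i. \<Sum>j<d. xs i j * x j"
  assumes n: "0 < n"
  shows "(real n * L2_set (matvec d (scov n xs) x) {..<d})\<^sup>2 = (\<Sum>i<n. \<Sum>l<n. a i * a l * gram d xs i l)"
    and "(\<Sum>i<n. (a i)\<^sup>2) \<le> real n * (L2_set x {..<d} * L2_set (matvec d (scov n xs) x) {..<d})"
proof -
  define v where "v = matvec d (scov n xs) x"
  have nr: "real n > 0" using n by simp
  have v_eq: "real n * v k = (\<Sum>i<n. xs i k * a i)" for k
  proof -
    have "v k = (\<Sum>j<d. \<Sum>i<n. xs i k * xs i j * x j) / real n"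
      by (simp add: v_def matvec_def scov_def sum_divide_distrib sum_distrib_right)
    also have "(\<Sum>j<d. \<Sum>i<n. xs i k * xs i j * x j) = (\<Sum>i<n. xs i k * a i)"
      by (subst sum.swap) (simp add: a_def sum_distrib_left mult_ac)
    finally show ?thesis using nr by simp
  qed
  have "(real n)\<^sup>2 * (\<Sum>k<d. (v k)\<^sup>2) = (\<Sum>k<d. (\<Sum>i<n. xs i k * a i) * (\<Sum>l<n. xs l k * a l))"
    by (simp add: sum_distrib_left power2_eq_square flip: v_eq) (simp add: algebra_simps)
  also have "\<dots> = (\<Sum>i<n. \<Sum>l<n. a i * a l * gram d xs i l)"
    by (simp add: gram_def sum_product sum_distrib_left sum.swap[of _ "{..<d}"] mult_ac)
  finally show "(real n * L2_set (matvec d (scov n xs) x) {..<d})\<^sup>2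
      = (\<Sum>i<n. \<Sum>l<n. a i * a l * gram d xs i l)"
    unfolding power_mult_distrib L2_set_squared v_def .
  have "(\<Sum>i<n. (a i)\<^sup>2) = (\<Sum>j<d. x j * (\<Sum>i<n. xs i j * a i))"
    unfolding a_def power2_eq_square
    by (simp add: sum_distrib_left sum_distrib_right mult_ac) (subst sum.swap, simp)
  also have "\<dots> = real n * (\<Sum>j<d. x j * v j)"
    by (simp add: sum_distrib_left flip: v_eq) (simp add: mult_ac)
  also have "\<dots> \<le> real n * (L2_set x {..<d} * L2_set v {..<d})"
    using nr by (intro mult_left_mono inner_le_L2_set) auto
  finally show "(\<Sum>i<n. (a i)\<^sup>2) \<le> real n * (L2_set x {..<d} * L2_set (matvec d (scov n xs) x) {..<d})"
    unfolding v_def .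
qed

lemma scov_matvec_bound:
  fixes xs :: "nat \<Rightarrow> nat \<Rightarrow> real"
  assumes n: "0 < n" and x: "L2_set x {..<d} = 1"
    and diag: "\<And>i. i < n \<Longrightarrow> gram d xs i i \<le> \<alpha>"
    and offdiag: "(\<Sum>i<n. \<Sum>l<n. if i = l then 0 else (gram d xs i l)\<^sup>2) \<le> \<beta>\<^sup>2" and \<beta>: "0 \<le> \<beta>"
  shows "real n * L2_set (matvec d (scov n xs) x) {..<d} \<le> \<alpha> + \<beta>"
proof -
  define a where "a i = (\<Sum>j<d. xs i j * x j)" for i
  define L where "L = real n * L2_set (matvec d (scov n xs) x) {..<d}"
  have \<alpha>: "0 \<le> \<alpha>" using diag[OF n] gram_diag_nonneg[of d xs 0] by linarith
  have L0: "0 \<le> L" unfolding L_def by simp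
  note form = scov_matvec_gram_form[where xs=xs and x=x and d=d, OF n, folded a_def]
  have "L * L = (\<Sum>i<n. \<Sum>l<n. a i * a l * gram d xs i l)"
    using form(1) unfolding L_def by (simp add: power2_eq_square)
  also have "\<dots> \<le> (\<alpha> + \<beta>) * (\<Sum>i<n. (a i)\<^sup>2)"
    by (rule quadratic_form_le_diag_offdiag[OF diag offdiag \<beta>])
  also have "\<dots> \<le> (\<alpha> + \<beta>) * L"
    using form(2) x \<alpha> \<beta> unfolding L_def by (intro mult_left_mono) auto
  finally have "L * L \<le> (\<alpha> + \<beta>) * L" .
  thus ?thesis
    using L0 \<alpha> \<beta> unfolding L_def[symmetric] by (cases "L = 0") (auto simp: mult_le_cancel_right)
qed

(* The corresponding bound for the normalised matrix scov / |scov|_F, using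
   |scov|_F >= sqrt(sum_i |xs i|^4) / n >= sqrt c / n. *)
lemma specnorm_normalized_scov_bound:
  fixes xs :: "nat \<Rightarrow> nat \<Rightarrow> real"
  assumes n: "0 < n" and d: "0 < d"
    and c: "0 < c" "c \<le> (\<Sum>i<n. (gram d xs i i)\<^sup>2)"
    and diag: "\<And>i. i < n \<Longrightarrow> gram d xs i i \<le> \<alpha>"
    and offdiag: "(\<Sum>i<n. \<Sum>l<n. if i = l then 0 else (gram d xs i l)\<^sup>2) \<le> \<beta>\<^sup>2" and \<beta>: "0 \<le> \<beta>"
  shows "specnorm d (\<lambda>j k. scov n xs j k / fnorm d (scov n xs)) \<le> (\<alpha> + \<beta>) / sqrt c"
proof -
  define F where "F = fnorm d (scov n xs)"
  have nr: "real n > 0" using n by simp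
  have \<alpha>: "0 \<le> \<alpha>" using diag[OF n] gram_diag_nonneg[of d xs 0] by linarith
  have "(\<Sum>i<n. (gram d xs i i)\<^sup>2) \<le> (\<Sum>i<n. \<Sum>l<n. (gram d xs i l)\<^sup>2)"
    by (intro sum_mono member_le_sum) auto
  hence "sqrt c \<le> sqrt (\<Sum>i<n. \<Sum>l<n. (gram d xs i l)\<^sup>2)" using c by simp
  hence F_lower: "sqrt c / real n \<le> F"
    unfolding F_def fnorm_scov using nr by (simp add: divide_right_mono)
  have lower_pos: "0 < sqrt c / real n" using c nr by simp
  hence Fp: "F > 0" using F_lower by linarith
  show ?thesis
  proof (rule specnorm_least[OF d])
    fix x assume x: "L2_set x {..<d} = 1"
    have "matvec d (\<lambda>j k. scov n xs j k / F) x = (\<lambda>i. (1 / F) * matvec d (scov n xs) x i)"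
      by (auto simp: matvec_def sum_distrib_left sum_divide_distrib)
    hence "L2_set (matvec d (\<lambda>j k. scov n xs j k / F) x) {..<d}
        = L2_set (matvec d (scov n xs) x) {..<d} / F"
      using Fp by (simp add: L2_set_divide)
    also have "\<dots> \<le> ((\<alpha> + \<beta>) / real n) / F"
      using scov_matvec_bound[OF n x diag offdiag \<beta>] nr Fp
      by (intro divide_right_mono) (auto simp: field_simps)
    also have "\<dots> \<le> ((\<alpha> + \<beta>) / real n) / (sqrt c / real n)"
      using F_lower lower_pos \<alpha> \<beta> Fp by (intro divide_left_mono mult_pos_pos) auto
    also have "\<dots> = (\<alpha> + \<beta>) / sqrt c" using nr by simp
    finally show "L2_set (matvec d (\<lambda>j k. scov n xs j k / fnorm d (scov n xs)) x) {..<d}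
        \<le> (\<alpha> + \<beta>) / sqrt c"
      unfolding F_def .
  qed
qed

lemma frob_normalized_scov_diff:
  assumes sym: "\<And>j k. j < d \<Longrightarrow> k < d \<Longrightarrow> R j k = R k j" and fpos: "fnorm d R > 0"
  shows "frob d (\<lambda>j k. scov n xs j k / fnorm d (scov n xs) - R j k / fnorm d R)
          \<le> 2 * frob d (\<lambda>j k. scov n xs j k - R j k) / fnorm d R"
proof -
  have e1: "fnorm d (scov n xs) = L2_set (\<lambda>p. scov n xs (fst p) (snd p)) ({..<d} \<times> {..<d})"
    using fnorm_eq_frob_if_symmetric[of d "scov n xs"] scov_symmetric frob_pair_L2_set by metis
  have e2: "fnorm d R = L2_set (\<lambda>p. R (fst p) (snd p)) ({..<d} \<times> {..<d})"
    using fnorm_eq_frob_if_symmetric[of d R] sym frob_pair_L2_set by metis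
  show ?thesis
    unfolding frob_pair_L2_set e1 e2
    using L2_set_normalized_diff[of "{..<d} \<times> {..<d}" "\<lambda>p. R (fst p) (snd p)"
        "\<lambda>p. scov n xs (fst p) (snd p)"] fpos e2
    by simp
qed

lemma abs_mult_le_sum_squares: "\<bar>a * b\<bar> \<le> a\<^sup>2 + (b::real)\<^sup>2"
proof -
  have "2 * \<bar>a\<bar> * \<bar>b\<bar> \<le> \<bar>a\<bar>\<^sup>2 + \<bar>b\<bar>\<^sup>2" by (rule sum_squares_bound)
  moreover have "0 \<le> \<bar>a\<bar> * \<bar>b\<bar>" by simp
  moreover have "\<bar>a\<bar>\<^sup>2 = a\<^sup>2" "\<bar>b\<bar>\<^sup>2 = b\<^sup>2" by simp_all
  moreover have "\<bar>a * b\<bar> = \<bar>a\<bar> * \<bar>b\<bar>" by (simp add: abs_mult)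
  ultimately show ?thesis by linarith
qed

(* (a + b)^4 <= 8 (a^4 + b^4), used to transfer fourth moments from W to T = f_1 + f W. *)
lemma power4_add_le: "(a + b) ^ 4 \<le> 8 * ((a::real) ^ 4 + b ^ 4)"
proof -
  have sq: "(x + y)\<^sup>2 \<le> 2 * (x\<^sup>2 + y\<^sup>2)" for x y :: real
    using sum_squares_bound[of x y] by (simp add: power2_eq_square algebra_simps)
  have "(a + b) ^ 4 = ((a + b)\<^sup>2)\<^sup>2" by simp
  also have "\<dots> \<le> (2 * (a\<^sup>2 + b\<^sup>2))\<^sup>2" by (intro power_mono sq) simp
  also have "\<dots> = 4 * (a\<^sup>2 + b\<^sup>2)\<^sup>2" by (simp only: power_mult_distrib) simp
  also have "(a\<^sup>2 + b\<^sup>2)\<^sup>2 \<le> 2 * ((a\<^sup>2)\<^sup>2 + (b\<^sup>2)\<^sup>2)" by (rule sq)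
  finally show ?thesis by simp
qed

lemma square_sum_products:
  "(\<Sum>j\<in>J. (a::'b\<Rightarrow>real) j * b j)\<^sup>2 = (\<Sum>j\<in>J. \<Sum>k\<in>J. (a j * a k) * (b j * b k))"
  unfolding power2_eq_square sum_product by (intro sum.cong refl) (simp add: mult_ac)

lemma integrable_mult_of_squares:
  fixes f g :: "'a \<Rightarrow> real"
  assumes "integrable M (\<lambda>x. (f x)\<^sup>2)" "integrable M (\<lambda>x. (g x)\<^sup>2)"
    and [measurable]: "f \<in> borel_measurable M" "g \<in> borel_measurable M"
  shows "integrable M (\<lambda>x. f x * g x)"
proof -
  have i: "integrable M (\<lambda>x. (f x)\<^sup>2 + (g x)\<^sup>2)" using assms by simp
  have ae: "AE x in M. norm (f x * g x) \<le> norm ((f x)\<^sup>2 + (g x)\<^sup>2)"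
  proof (rule AE_I2)
    fix x
    have "0 \<le> (f x)\<^sup>2 + (g x)\<^sup>2" by simp
    thus "norm (f x * g x) \<le> norm ((f x)\<^sup>2 + (g x)\<^sup>2)"
      using abs_mult_le_sum_squares[of "f x" "g x"] by simp
  qed
  have m: "(\<lambda>x. f x * g x) \<in> borel_measurable M" by measurable
  show ?thesis by (rule Bochner_Integration.integrable_bound[OF i m ae])
qed

lemma integrable_double_sum:
  fixes f :: "'i \<Rightarrow> 'k \<Rightarrow> 'a \<Rightarrow> real"
  assumes "\<And>j k. j \<in> J \<Longrightarrow> k \<in> K \<Longrightarrow> integrable M (f j k)"
  shows "integrable M (\<lambda>x. \<Sum>j\<in>J. \<Sum>k\<in>K. f j k x)"
    and "integral\<^sup>L M (\<lambda>x. \<Sum>j\<in>J. \<Sum>k\<in>K. f j k x) = (\<Sum>j\<in>J. \<Sum>k\<in>K. integral\<^sup>L M (f j k))"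
proof -
  have inner: "integrable M (\<lambda>x. \<Sum>k\<in>K. f j k x)" if "j \<in> J" for j
    using assms that by (intro Bochner_Integration.integrable_sum) blast
  show "integrable M (\<lambda>x. \<Sum>j\<in>J. \<Sum>k\<in>K. f j k x)"
    by (rule Bochner_Integration.integrable_sum, rule inner)
  have "integral\<^sup>L M (\<lambda>x. \<Sum>j\<in>J. \<Sum>k\<in>K. f j k x) = (\<Sum>j\<in>J. integral\<^sup>L M (\<lambda>x. \<Sum>k\<in>K. f j k x))"
    using inner by (rule Bochner_Integration.integral_sum)
  also have "\<dots> = (\<Sum>j\<in>J. \<Sum>k\<in>K. integral\<^sup>L M (f j k))"
    using assms by (intro sum.cong refl Bochner_Integration.integral_sum) auto
  finally show "integral\<^sup>L M (\<lambda>x. \<Sum>j\<in>J. \<Sum>k\<in>K. f j k x) = (\<Sum>j\<in>J. \<Sum>k\<in>K. integral\<^sup>L M (f j k))" .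
qed

(* Monotonicity of the measure when only the larger set is known to be measurable. *)
lemma (in finite_measure) measure_le_subset:
  assumes "B \<in> sets M" "A \<subseteq> B"
  shows "measure M A \<le> measure M B"
proof (cases "A \<in> sets M")
  case True thus ?thesis using assms by (intro finite_measure_mono) auto
next
  case False thus ?thesis by (simp add: measure_notin_sets)
qed

lemma (in prob_space) Markov:
  assumes "integrable M u" "u \<in> borel_measurable M" "\<And>\<omega>. 0 \<le> u \<omega>" "0 < c"
  shows "measure M {\<omega> \<in> space M. c \<le> u \<omega>} \<le> expectation u / c"
  using integral_Markov_inequality_measure[OF assms(1) sets.top, of c] assms by auto

lemma (in prob_space) indep_centered_product:
  fixes Y :: "'i \<Rightarrow> 'a \<Rightarrow> real"
  assumes ind: "indep_vars (\<lambda>_. borel) Y {i, l}" and il: "i \<noteq> l"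
    and int: "integrable M (Y i)" "integrable M (Y l)"
    and mean: "expectation (Y i) = m" "expectation (Y l) = m"
  shows "expectation (\<lambda>\<omega>. (Y i \<omega> - m) * (Y l \<omega> - m)) = 0"
proof -
  have ind2: "indep_vars (\<lambda>_. borel) (\<lambda>k \<omega>. Y k \<omega> - m) {i, l}"
    using indep_vars_compose2[OF ind, of "\<lambda>k y. y - m" "\<lambda>_. borel"] by auto
  have "expectation (\<lambda>\<omega>. \<Prod>k\<in>{i, l}. Y k \<omega> - m) = (\<Prod>k\<in>{i, l}. expectation (\<lambda>\<omega>. Y k \<omega> - m))"
    by (rule indep_vars_lebesgue_integral[OF _ ind2]) (use int in auto)
  moreover have "expectation (\<lambda>\<omega>. Y i \<omega> - m) = 0" using int(1) mean(1) by (simp add: prob_space)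
  ultimately show ?thesis using il by simp
qed

lemma (in prob_space) variance_sum_indep:
  fixes Y :: "'i \<Rightarrow> 'a \<Rightarrow> real"
  assumes fin: "finite I" and ind: "indep_vars (\<lambda>_. borel) Y I"
    and sq: "\<And>i. i \<in> I \<Longrightarrow> integrable M (\<lambda>\<omega>. (Y i \<omega>)\<^sup>2)"
    and me: "\<And>i. i \<in> I \<Longrightarrow> Y i \<in> borel_measurable M"
    and m: "\<And>i. i \<in> I \<Longrightarrow> expectation (Y i) = m"
    and s: "\<And>i. i \<in> I \<Longrightarrow> expectation (\<lambda>\<omega>. (Y i \<omega>)\<^sup>2) = s"
  shows "integrable M (\<lambda>\<omega>. (\<Sum>i\<in>I. Y i \<omega> - m)\<^sup>2)"
    and "expectation (\<lambda>\<omega>. (\<Sum>i\<in>I. Y i \<omega> - m)\<^sup>2) = real (card I) * (s - m\<^sup>2)"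
proof -
  have intY: "integrable M (Y i)" if "i \<in> I" for i
    using square_integrable_imp_integrable[OF me[OF that] sq[OF that]] .
  have Zsq: "integrable M (\<lambda>\<omega>. (Y i \<omega> - m)\<^sup>2)" if "i \<in> I" for i
    using sq[OF that] intY[OF that] unfolding power2_eq_square ring_distribs
    by (intro Bochner_Integration.integrable_diff Bochner_Integration.integrable_add) auto
  have Zme: "(\<lambda>\<omega>. Y i \<omega> - m) \<in> borel_measurable M" if "i \<in> I" for i
    using me[OF that] by measurable
  have Zprod: "integrable M (\<lambda>\<omega>. (Y i \<omega> - m) * (Y l \<omega> - m))" if "i \<in> I" "l \<in> I" for i l
    by (rule integrable_mult_of_squares[OF Zsq[OF that(1)] Zsq[OF that(2)] Zme[OF that(1)] Zme[OF that(2)]])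
  have sq_eq: "(\<Sum>i\<in>I. Y i \<omega> - m)\<^sup>2 = (\<Sum>i\<in>I. \<Sum>l\<in>I. (Y i \<omega> - m) * (Y l \<omega> - m))" for \<omega>
    by (simp add: power2_eq_square sum_product)
  show "integrable M (\<lambda>\<omega>. (\<Sum>i\<in>I. Y i \<omega> - m)\<^sup>2)"
    unfolding sq_eq using Zprod by (intro integrable_double_sum(1))
  have covariance: "expectation (\<lambda>\<omega>. (Y i \<omega> - m) * (Y l \<omega> - m)) = (if i = l then s - m\<^sup>2 else 0)"
    if il: "i \<in> I" "l \<in> I" for i l
  proof (cases "i = l")
    case True
    have "(\<lambda>\<omega>. (Y i \<omega> - m) * (Y i \<omega> - m)) = (\<lambda>\<omega>. ((Y i \<omega>)\<^sup>2 - 2 * m * Y i \<omega>) + m\<^sup>2)"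
      by (auto simp: fun_eq_iff power2_eq_square algebra_simps)
    thus ?thesis
      using True sq[OF il(1)] intY[OF il(1)] m[OF il(1)] s[OF il(1)]
      by (simp add: prob_space power2_eq_square)
  next
    case False
    have "indep_vars (\<lambda>_. borel) Y {i, l}" using indep_vars_subset[OF ind] il by auto
    thus ?thesis using indep_centered_product[of Y i l m] False intY il m by simp
  qed
  have "expectation (\<lambda>\<omega>. (\<Sum>i\<in>I. Y i \<omega> - m)\<^sup>2)
      = (\<Sum>i\<in>I. \<Sum>l\<in>I. expectation (\<lambda>\<omega>. (Y i \<omega> - m) * (Y l \<omega> - m)))"
    unfolding sq_eq using Zprod by (intro integrable_double_sum(2))
  also have "\<dots> = (\<Sum>i\<in>I. \<Sum>l\<in>I. (if i = l then s - m\<^sup>2 else 0))"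
    using covariance by (intro sum.cong refl) auto
  also have "\<dots> = real (card I) * (s - m\<^sup>2)" using fin by (simp add: sum.delta)
  finally show "expectation (\<lambda>\<omega>. (\<Sum>i\<in>I. Y i \<omega> - m)\<^sup>2) = real (card I) * (s - m\<^sup>2)" .
qed

locale iid_sample = prob_space M for M :: "'a measure" +
  fixes n d :: nat and Xs :: "nat \<Rightarrow> 'a \<Rightarrow> nat \<Rightarrow> real" and S :: "nat \<Rightarrow> nat \<Rightarrow> real"
  assumes n_pos: "0 < n"
  and meas: "\<And>i. i < n \<Longrightarrow> (\<lambda>\<omega>. restrict (Xs i \<omega>) {..<d}) \<in> M \<rightarrow>\<^sub>M vecspace d"
  and indep: "indep_vars (\<lambda>_. vecspace d) (\<lambda>i \<omega>. restrict (Xs i \<omega>) {..<d}) {..<n}"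
  and ident: "\<And>i. i < n \<Longrightarrow> distr M (vecspace d) (\<lambda>\<omega>. restrict (Xs i \<omega>) {..<d})
                 = distr M (vecspace d) (\<lambda>\<omega>. restrict (Xs 0 \<omega>) {..<d})"
  and sqint: "\<And>j. j < d \<Longrightarrow> integrable M (\<lambda>\<omega>. (Xs 0 \<omega> j)\<^sup>2)"
  and S_def: "\<And>j k. j < d \<Longrightarrow> k < d \<Longrightarrow> S j k = integral\<^sup>L M (\<lambda>\<omega>. Xs 0 \<omega> j * Xs 0 \<omega> k)"
  and S_nonzero: "\<exists>j<d. \<exists>k<d. S j k \<noteq> 0"

lemma iid_model_sample:
  assumes "iid_model M p X S" "0 < n"
  shows "iid_sample (M n) n (p n) (X n) (S n)"
proof -
  note h = assms(1)[unfolded iid_model_def, rule_format, OF assms(2)]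
  show ?thesis unfolding iid_sample_def iid_sample_axioms_def
    using h assms(2) by (elim conjE) (intro conjI allI impI; blast)
qed

context iid_sample
begin

abbreviation V :: "nat \<Rightarrow> 'a \<Rightarrow> nat \<Rightarrow> real" where
  "V i \<omega> \<equiv> restrict (Xs i \<omega>) {..<d}"

abbreviation T :: "nat \<Rightarrow> 'a \<Rightarrow> real" where
  "T i \<omega> \<equiv> vdot d (Xs i \<omega>) (Xs i \<omega>)"

lemma d_pos: "0 < d" using S_nonzero by auto

lemma coordinate_measurable: "i < n \<Longrightarrow> j < d \<Longrightarrow> (\<lambda>\<omega>. Xs i \<omega> j) \<in> borel_measurable M"
  using measurable_compose[OF meas measurable_component_singleton[of j "{..<d}" "\<lambda>_. borel"]] by simp

lemma vector_coordinate_measurable: "j < d \<Longrightarrow> (\<lambda>v. v j) \<in> borel_measurable (vecspace d)"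
  using measurable_component_singleton[of j "{..<d}" "\<lambda>_. borel"] by simp

lemma product_measurable: "j < d \<Longrightarrow> k < d \<Longrightarrow> (\<lambda>v. v j * v k) \<in> borel_measurable (vecspace d)"
  by (intro borel_measurable_times vector_coordinate_measurable)

lemma functional_measurable:
  "g \<in> borel_measurable (vecspace d) \<Longrightarrow> i < n \<Longrightarrow> (\<lambda>\<omega>. g (V i \<omega>)) \<in> borel_measurable M"
  using measurable_compose[OF meas] by blast

lemma functional_integral:
  fixes g :: "(nat \<Rightarrow> real) \<Rightarrow> real"
  assumes g: "g \<in> borel_measurable (vecspace d)" and i: "i < n"
  shows "integral\<^sup>L M (\<lambda>\<omega>. g (V i \<omega>)) = integral\<^sup>L M (\<lambda>\<omega>. g (V 0 \<omega>))"
  using integral_distr[OF meas[OF i] g] integral_distr[OF meas[OF n_pos] g] ident[OF i] by simp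

lemma functional_integrable:
  fixes g :: "(nat \<Rightarrow> real) \<Rightarrow> real"
  assumes g: "g \<in> borel_measurable (vecspace d)" and i: "i < n"
  shows "integrable M (\<lambda>\<omega>. g (V i \<omega>)) \<longleftrightarrow> integrable M (\<lambda>\<omega>. g (V 0 \<omega>))"
  using integrable_distr_eq[OF meas[OF i] g] integrable_distr_eq[OF meas[OF n_pos] g] ident[OF i]
  by simp

lemma functional_indep:
  assumes g: "g \<in> borel_measurable (vecspace d)" and I: "I \<subseteq> {..<n}"
  shows "indep_vars (\<lambda>_. borel) (\<lambda>i \<omega>. g (V i \<omega>)) I"
  using indep_vars_compose2[OF indep_vars_subset[OF indep I], of "\<lambda>_. g"] g by simp

lemma S_symmetric: "j < d \<Longrightarrow> k < d \<Longrightarrow> S j k = S k j"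
  by (simp add: S_def mult.commute)

lemma fnorm_S_eq_frob: "fnorm d S = frob d S"
  by (rule fnorm_eq_frob_if_symmetric) (rule S_symmetric)

lemma fnorm_S_squared: "(fnorm d S)\<^sup>2 = (\<Sum>j<d. \<Sum>k<d. (S j k)\<^sup>2)"
  unfolding fnorm_S_eq_frob frob_def by (simp add: sum_nonneg)

lemma fnorm_S_pos: "0 < fnorm d S"
proof -
  obtain j k where jk: "j < d" "k < d" "S j k \<noteq> 0" using S_nonzero by auto
  have "0 < (S j k)\<^sup>2" using jk by simp
  also have "(S j k)\<^sup>2 \<le> (\<Sum>k<d. (S j k)\<^sup>2)" using jk by (intro member_le_sum) auto
  also have "\<dots> \<le> (\<Sum>j<d. \<Sum>k<d. (S j k)\<^sup>2)"
    using jk by (intro member_le_sum[of j "{..<d}" "\<lambda>j. \<Sum>k<d. (S j k)\<^sup>2"]) (auto intro: sum_nonneg)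
  finally have "0 < (fnorm d S)\<^sup>2" unfolding fnorm_S_squared .
  moreover have "0 \<le> fnorm d S" unfolding fnorm_S_eq_frob by (rule frob_nonneg)
  ultimately show ?thesis by (simp add: order_less_le)
qed

lemma products_moment:
  assumes jk: "j < d" "k < d" and i: "i < n"
  shows "integrable M (\<lambda>\<omega>. Xs i \<omega> j * Xs i \<omega> k)"
    and "expectation (\<lambda>\<omega>. Xs i \<omega> j * Xs i \<omega> k) = S j k"
proof -
  have "integrable M (\<lambda>\<omega>. Xs 0 \<omega> j * Xs 0 \<omega> k)"
    by (rule integrable_mult_of_squares[OF sqint[OF jk(1)] sqint[OF jk(2)]
          coordinate_measurable[OF n_pos jk(1)] coordinate_measurable[OF n_pos jk(2)]])
  thus "integrable M (\<lambda>\<omega>. Xs i \<omega> j * Xs i \<omega> k)"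
    using functional_integrable[OF product_measurable[OF jk] i] jk by simp
  show "expectation (\<lambda>\<omega>. Xs i \<omega> j * Xs i \<omega> k) = S j k"
    using functional_integral[OF product_measurable[OF jk] i] jk by (simp add: S_def)
qed

lemma T_squared: "(T i \<omega>)\<^sup>2 = (\<Sum>j<d. \<Sum>k<d. (Xs i \<omega> j * Xs i \<omega> k)\<^sup>2)"
  unfolding vdot_def square_sum_products by (simp add: power2_eq_square)

lemma T_measurable: "i < n \<Longrightarrow> (\<lambda>\<omega>. T i \<omega>) \<in> borel_measurable M"
  unfolding vdot_def by (intro borel_measurable_sum borel_measurable_times coordinate_measurable) auto

lemma products_square_integrable:
  assumes T2: "integrable M (\<lambda>\<omega>. (T 0 \<omega>)\<^sup>2)" and jk: "j < d" "k < d"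
  shows "integrable M (\<lambda>\<omega>. (Xs 0 \<omega> j * Xs 0 \<omega> k)\<^sup>2)"
proof (rule Bochner_Integration.integrable_bound[OF T2])
  show "(\<lambda>\<omega>. (Xs 0 \<omega> j * Xs 0 \<omega> k)\<^sup>2) \<in> borel_measurable M"
    using jk by (intro borel_measurable_power borel_measurable_times coordinate_measurable n_pos)
  show "AE \<omega> in M. norm ((Xs 0 \<omega> j * Xs 0 \<omega> k)\<^sup>2) \<le> norm ((T 0 \<omega>)\<^sup>2)"
  proof (rule AE_I2)
    fix \<omega>
    have "(Xs 0 \<omega> j * Xs 0 \<omega> k)\<^sup>2 \<le> (\<Sum>k<d. (Xs 0 \<omega> j * Xs 0 \<omega> k)\<^sup>2)"
      using jk by (intro member_le_sum) auto
    also have "\<dots> \<le> (\<Sum>j<d. \<Sum>k<d. (Xs 0 \<omega> j * Xs 0 \<omega> k)\<^sup>2)"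
      using jk by (intro member_le_sum[of j "{..<d}" "\<lambda>j. \<Sum>k<d. (Xs 0 \<omega> j * Xs 0 \<omega> k)\<^sup>2"])
        (auto intro: sum_nonneg)
    finally show "norm ((Xs 0 \<omega> j * Xs 0 \<omega> k)\<^sup>2) \<le> norm ((T 0 \<omega>)\<^sup>2)" unfolding T_squared by simp
  qed
qed

lemma functional_sum_variance:
  fixes g :: "(nat \<Rightarrow> real) \<Rightarrow> real"
  assumes g: "g \<in> borel_measurable (vecspace d)" and g2: "integrable M (\<lambda>\<omega>. (g (V 0 \<omega>))\<^sup>2)"
  shows "integrable M (\<lambda>\<omega>. (\<Sum>i<n. g (V i \<omega>) - expectation (\<lambda>\<omega>. g (V 0 \<omega>)))\<^sup>2)"
    and "expectation (\<lambda>\<omega>. (\<Sum>i<n. g (V i \<omega>) - expectation (\<lambda>\<omega>. g (V 0 \<omega>)))\<^sup>2)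
           = real n * (expectation (\<lambda>\<omega>. (g (V 0 \<omega>))\<^sup>2) - (expectation (\<lambda>\<omega>. g (V 0 \<omega>)))\<^sup>2)"
proof -
  have g2m: "(\<lambda>v. (g v)\<^sup>2) \<in> borel_measurable (vecspace d)" using g by measurable
  have ind: "indep_vars (\<lambda>_. borel) (\<lambda>i \<omega>. g (V i \<omega>)) {..<n}" by (rule functional_indep[OF g]) simp
  have sq: "integrable M (\<lambda>\<omega>. (g (V i \<omega>))\<^sup>2)" if "i \<in> {..<n}" for i
    using functional_integrable[OF g2m, of i] that g2 by simp
  have meas: "(\<lambda>\<omega>. g (V i \<omega>)) \<in> borel_measurable M" if "i \<in> {..<n}" for i
    using functional_measurable[OF g, of i] that by simp
  have mean: "expectation (\<lambda>\<omega>. g (V i \<omega>)) = expectation (\<lambda>\<omega>. g (V 0 \<omega>))" if "i \<in> {..<n}" for i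
    using functional_integral[OF g, of i] that by simp
  have second: "expectation (\<lambda>\<omega>. (g (V i \<omega>))\<^sup>2) = expectation (\<lambda>\<omega>. (g (V 0 \<omega>))\<^sup>2)"
    if "i \<in> {..<n}" for i
    using functional_integral[OF g2m, of i] that by simp
  note var = variance_sum_indep[OF _ ind sq meas mean second]
  show "integrable M (\<lambda>\<omega>. (\<Sum>i<n. g (V i \<omega>) - expectation (\<lambda>\<omega>. g (V 0 \<omega>)))\<^sup>2)"
    using var(1) by simp
  show "expectation (\<lambda>\<omega>. (\<Sum>i<n. g (V i \<omega>) - expectation (\<lambda>\<omega>. g (V 0 \<omega>)))\<^sup>2)
           = real n * (expectation (\<lambda>\<omega>. (g (V 0 \<omega>))\<^sup>2) - (expectation (\<lambda>\<omega>. g (V 0 \<omega>)))\<^sup>2)"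
    using var(2) by simp
qed

abbreviation Shat :: "'a \<Rightarrow> nat \<Rightarrow> nat \<Rightarrow> real" where
  "Shat \<omega> \<equiv> scov n (\<lambda>i. Xs i \<omega>)"

lemma Shat_entry_measurable: "j < d \<Longrightarrow> k < d \<Longrightarrow> (\<lambda>\<omega>. Shat \<omega> j k) \<in> borel_measurable M"
  unfolding scov_def
  by (intro borel_measurable_divide borel_measurable_sum borel_measurable_times coordinate_measurable) auto

lemma fnorm_Shat_measurable: "(\<lambda>\<omega>. fnorm d (Shat \<omega>)) \<in> borel_measurable M"
  unfolding fnorm_def mtrace_def mmult_def using Shat_entry_measurable by measurable

lemma norm_diff_eq: "norm_diff d n Xs S \<omega> = (\<lambda>j k. Shat \<omega> j k / fnorm d (Shat \<omega>) - S j k / fnorm d S)"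
  by (simp add: fun_eq_iff norm_diff_def sample_cov_eq_scov)

lemma specnorm_norm_diff_measurable: "(\<lambda>\<omega>. specnorm d (norm_diff d n Xs S \<omega>)) \<in> borel_measurable M"
  unfolding norm_diff_eq
  by (rule specnorm_measurable[OF d_pos]) (use Shat_entry_measurable fnorm_Shat_measurable in measurable)

lemma specnorm_normalized_Shat_measurable:
  "(\<lambda>\<omega>. specnorm d (\<lambda>j k. sample_cov n Xs \<omega> j k / fnorm d (sample_cov n Xs \<omega>))) \<in> borel_measurable M"
  unfolding sample_cov_eq_scov
  by (rule specnorm_measurable[OF d_pos]) (use Shat_entry_measurable fnorm_Shat_measurable in measurable)

lemma Shat_entry_mse:
  assumes T2: "integrable M (\<lambda>\<omega>. (T 0 \<omega>)\<^sup>2)" and jk: "j < d" "k < d"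
  shows "integrable M (\<lambda>\<omega>. (Shat \<omega> j k - S j k)\<^sup>2)"
    and "expectation (\<lambda>\<omega>. (Shat \<omega> j k - S j k)\<^sup>2)
          \<le> expectation (\<lambda>\<omega>. (Xs 0 \<omega> j * Xs 0 \<omega> k)\<^sup>2) / real n"
proof -
  define s where "s = expectation (\<lambda>\<omega>. (Xs 0 \<omega> j * Xs 0 \<omega> k)\<^sup>2)"
  define Z where "Z \<omega> = (\<Sum>i<n. V i \<omega> j * V i \<omega> k - S j k)" for \<omega>
  have "integrable M (\<lambda>\<omega>. (V 0 \<omega> j * V 0 \<omega> k)\<^sup>2)"
    using products_square_integrable[OF T2 jk] jk by simp
  note var = functional_sum_variance[OF product_measurable[OF jk] this]
  have mean: "expectation (\<lambda>\<omega>. V 0 \<omega> j * V 0 \<omega> k) = S j k" using jk by (simp add: S_def)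
  have Z_int: "integrable M (\<lambda>\<omega>. (Z \<omega>)\<^sup>2)" and Z_var: "expectation (\<lambda>\<omega>. (Z \<omega>)\<^sup>2) = real n * (s - (S j k)\<^sup>2)"
    using var jk unfolding Z_def s_def mean by simp_all
  have nr: "real n > 0" using n_pos by simp
  have eq: "(Shat \<omega> j k - S j k)\<^sup>2 = (Z \<omega>)\<^sup>2 / (real n)\<^sup>2" for \<omega>
  proof -
    have "Shat \<omega> j k - S j k = Z \<omega> / real n"
      using nr jk by (simp add: scov_def Z_def sum_subtractf field_simps)
    thus ?thesis by (simp add: power_divide)
  qed
  show "integrable M (\<lambda>\<omega>. (Shat \<omega> j k - S j k)\<^sup>2)" unfolding eq using Z_int by simp
  have "expectation (\<lambda>\<omega>. (Shat \<omega> j k - S j k)\<^sup>2) = real n * (s - (S j k)\<^sup>2) / (real n)\<^sup>2"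
    unfolding eq Z_var[symmetric] by simp
  also have "\<dots> \<le> real n * s / (real n)\<^sup>2"
    using nr by (intro divide_right_mono mult_left_mono) auto
  also have "\<dots> = s / real n" using nr by (simp add: power2_eq_square)
  finally show "expectation (\<lambda>\<omega>. (Shat \<omega> j k - S j k)\<^sup>2)
          \<le> expectation (\<lambda>\<omega>. (Xs 0 \<omega> j * Xs 0 \<omega> k)\<^sup>2) / real n"
    unfolding s_def .
qed

definition frob_error :: "'a \<Rightarrow> real" where
  "frob_error \<omega> = (\<Sum>j<d. \<Sum>k<d. (Shat \<omega> j k - S j k)\<^sup>2)"

lemma frob_error_measurable: "frob_error \<in> borel_measurable M"
  unfolding frob_error_def using Shat_entry_measurable by measurable

lemma frob_error_nonneg: "0 \<le> frob_error \<omega>"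
  unfolding frob_error_def by (intro sum_nonneg) auto

lemma frob_error_moment:
  assumes T2: "integrable M (\<lambda>\<omega>. (T 0 \<omega>)\<^sup>2)"
  shows "integrable M frob_error" and "expectation frob_error \<le> expectation (\<lambda>\<omega>. (T 0 \<omega>)\<^sup>2) / real n"
proof -
  show "integrable M frob_error" unfolding frob_error_def
    by (intro integrable_double_sum(1) Shat_entry_mse(1)[OF T2]) auto
  have "expectation frob_error = (\<Sum>j<d. \<Sum>k<d. expectation (\<lambda>\<omega>. (Shat \<omega> j k - S j k)\<^sup>2))"
    unfolding frob_error_def by (intro integrable_double_sum(2) Shat_entry_mse(1)[OF T2]) auto
  also have "\<dots> \<le> (\<Sum>j<d. \<Sum>k<d. expectation (\<lambda>\<omega>. (Xs 0 \<omega> j * Xs 0 \<omega> k)\<^sup>2) / real n)"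
    using Shat_entry_mse(2)[OF T2] by (intro sum_mono) auto
  also have "\<dots> = expectation (\<lambda>\<omega>. (T 0 \<omega>)\<^sup>2) / real n"
  proof -
    have "expectation (\<lambda>\<omega>. \<Sum>j<d. \<Sum>k<d. (Xs 0 \<omega> j * Xs 0 \<omega> k)\<^sup>2)
        = (\<Sum>j<d. \<Sum>k<d. expectation (\<lambda>\<omega>. (Xs 0 \<omega> j * Xs 0 \<omega> k)\<^sup>2))"
      by (intro integrable_double_sum(2) products_square_integrable[OF T2]) auto
    thus ?thesis unfolding T_squared by (simp add: sum_divide_distrib)
  qed
  finally show "expectation frob_error \<le> expectation (\<lambda>\<omega>. (T 0 \<omega>)\<^sup>2) / real n" .
qed

lemma frob_norm_diff_squared_le: "(frob d (norm_diff d n Xs S \<omega>))\<^sup>2 \<le> 4 * frob_error \<omega> / (fnorm d S)\<^sup>2"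
proof -
  have "frob d (norm_diff d n Xs S \<omega>) \<le> 2 * frob d (\<lambda>j k. Shat \<omega> j k - S j k) / fnorm d S"
    unfolding norm_diff_eq by (rule frob_normalized_scov_diff) (use S_symmetric fnorm_S_pos in auto)
  also have "frob d (\<lambda>j k. Shat \<omega> j k - S j k) = sqrt (frob_error \<omega>)"
    unfolding frob_def frob_error_def ..
  finally have "(frob d (norm_diff d n Xs S \<omega>))\<^sup>2 \<le> (2 * sqrt (frob_error \<omega>) / fnorm d S)\<^sup>2"
    by (intro power_mono) (simp_all add: frob_nonneg)
  also have "\<dots> = 4 * frob_error \<omega> / (fnorm d S)\<^sup>2"
    using frob_error_nonneg[of \<omega>] by (simp add: power_divide power_mult_distrib)
  finally show ?thesis .
qed

lemma consistency_bounds: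
  assumes T2: "integrable M (\<lambda>\<omega>. (T 0 \<omega>)\<^sup>2)"
  shows "expectation (\<lambda>\<omega>. (frob d (norm_diff d n Xs S \<omega>))\<^sup>2)
           \<le> 4 * expectation (\<lambda>\<omega>. (T 0 \<omega>)\<^sup>2) / (real n * (fnorm d S)\<^sup>2)"
    and "\<And>e. 0 < e \<Longrightarrow> measure M {\<omega> \<in> space M. e < \<bar>specnorm d (norm_diff d n Xs S \<omega>)\<bar>}
           \<le> 4 * expectation (\<lambda>\<omega>. (T 0 \<omega>)\<^sup>2) / (real n * (fnorm d S)\<^sup>2 * e\<^sup>2)"
proof -
  define U where "U \<omega> = 4 * frob_error \<omega> / (fnorm d S)\<^sup>2" for \<omega>
  have fp: "0 < fnorm d S" by (rule fnorm_S_pos)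
  have U_int: "integrable M U" unfolding U_def using frob_error_moment(1)[OF T2] by simp
  have U_meas: "U \<in> borel_measurable M" unfolding U_def using frob_error_measurable by measurable
  have U_nonneg: "0 \<le> U \<omega>" for \<omega> unfolding U_def using frob_error_nonneg[of \<omega>] by simp
  have EU: "expectation U \<le> 4 * expectation (\<lambda>\<omega>. (T 0 \<omega>)\<^sup>2) / (real n * (fnorm d S)\<^sup>2)"
    using frob_error_moment(2)[OF T2] fp unfolding U_def
    by (simp add: divide_right_mono field_simps)
  have "expectation (\<lambda>\<omega>. (frob d (norm_diff d n Xs S \<omega>))\<^sup>2) \<le> expectation U"
    by (rule integral_mono_AE'[OF U_int]) (use frob_norm_diff_squared_le U_nonneg in \<open>auto simp: U_def\<close>)
  thus "expectation (\<lambda>\<omega>. (frob d (norm_diff d n Xs S \<omega>))\<^sup>2)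
           \<le> 4 * expectation (\<lambda>\<omega>. (T 0 \<omega>)\<^sup>2) / (real n * (fnorm d S)\<^sup>2)"
    using EU by linarith
  fix e :: real assume e: "0 < e"
  have "{\<omega> \<in> space M. e < \<bar>specnorm d (norm_diff d n Xs S \<omega>)\<bar>} \<subseteq> {\<omega> \<in> space M. e\<^sup>2 \<le> U \<omega>}"
  proof safe
    fix \<omega> assume "e < \<bar>specnorm d (norm_diff d n Xs S \<omega>)\<bar>"
    hence "e < frob d (norm_diff d n Xs S \<omega>)"
      using specnorm_nonneg[OF d_pos] specnorm_le_frob[OF d_pos] by (smt (verit))
    hence "e\<^sup>2 \<le> (frob d (norm_diff d n Xs S \<omega>))\<^sup>2" using e by (intro power_mono) auto
    thus "e\<^sup>2 \<le> U \<omega>" using frob_norm_diff_squared_le[of \<omega>] unfolding U_def by linarith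
  qed
  hence "measure M {\<omega> \<in> space M. e < \<bar>specnorm d (norm_diff d n Xs S \<omega>)\<bar>}
      \<le> measure M {\<omega> \<in> space M. e\<^sup>2 \<le> U \<omega>}"
    by (intro measure_le_subset) (use U_meas in measurable)
  also have "\<dots> \<le> expectation U / e\<^sup>2" using U_int U_meas U_nonneg e by (intro Markov) auto
  also have "\<dots> \<le> 4 * expectation (\<lambda>\<omega>. (T 0 \<omega>)\<^sup>2) / (real n * (fnorm d S)\<^sup>2) / e\<^sup>2"
    using EU e by (intro divide_right_mono) auto
  finally show "measure M {\<omega> \<in> space M. e < \<bar>specnorm d (norm_diff d n Xs S \<omega>)\<bar>}
      \<le> 4 * expectation (\<lambda>\<omega>. (T 0 \<omega>)\<^sup>2) / (real n * (fnorm d S)\<^sup>2 * e\<^sup>2)"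
    by simp
qed

abbreviation m2 :: real where "m2 \<equiv> expectation (\<lambda>\<omega>. (T 0 \<omega>)\<^sup>2)"
abbreviation m4 :: real where "m4 \<equiv> expectation (\<lambda>\<omega>. (T 0 \<omega>) ^ 4)"

(* Squared length as a measurable functional of one observation, so that T_i = sqlen(X_i)
   inherits identical distribution and independence. *)
definition sqlen :: "(nat \<Rightarrow> real) \<Rightarrow> real" where "sqlen v = (\<Sum>j<d. v j * v j)"

lemma sqlen_measurable: "sqlen \<in> borel_measurable (vecspace d)"
  unfolding sqlen_def by (intro borel_measurable_sum borel_measurable_times vector_coordinate_measurable) auto

lemma T_eq_sqlen: "T i \<omega> = sqlen (V i \<omega>)"
  by (simp add: sqlen_def vdot_def)

lemma gram_diag_eq_T: "gram d (\<lambda>i. Xs i \<omega>) i i = T i \<omega>"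
  by (simp add: gram_def vdot_def)

lemma T_moments:
  assumes T2: "integrable M (\<lambda>\<omega>. (T 0 \<omega>)\<^sup>2)" and T4: "integrable M (\<lambda>\<omega>. (T 0 \<omega>) ^ 4)"
    and i: "i < n"
  shows "integrable M (\<lambda>\<omega>. (T i \<omega>)\<^sup>2)" "integrable M (\<lambda>\<omega>. (T i \<omega>) ^ 4)"
    "expectation (\<lambda>\<omega>. (T i \<omega>)\<^sup>2) = m2" "expectation (\<lambda>\<omega>. (T i \<omega>) ^ 4) = m4"
proof -
  have m2: "(\<lambda>v. (sqlen v)\<^sup>2) \<in> borel_measurable (vecspace d)" using sqlen_measurable by measurable
  have m4: "(\<lambda>v. (sqlen v) ^ 4) \<in> borel_measurable (vecspace d)" using sqlen_measurable by measurable
  show "integrable M (\<lambda>\<omega>. (T i \<omega>)\<^sup>2)" "integrable M (\<lambda>\<omega>. (T i \<omega>) ^ 4)"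
    using functional_integrable[OF m2 i] functional_integrable[OF m4 i] T2 T4
    unfolding T_eq_sqlen by simp_all
  show "expectation (\<lambda>\<omega>. (T i \<omega>)\<^sup>2) = m2" "expectation (\<lambda>\<omega>. (T i \<omega>) ^ 4) = m4"
    using functional_integral[OF m2 i] functional_integral[OF m4 i] unfolding T_eq_sqlen by simp_all
qed

lemma T_expectation: "integrable M (T 0)" "expectation (T 0) = mtrace d S"
proof -
  show "integrable M (T 0)"
    unfolding vdot_def using sqint by (intro Bochner_Integration.integrable_sum) (simp add: power2_eq_square)
  have "expectation (T 0) = (\<Sum>j<d. expectation (\<lambda>\<omega>. Xs 0 \<omega> j * Xs 0 \<omega> j))"
    unfolding vdot_def using sqint by (subst Bochner_Integration.integral_sum) (auto simp: power2_eq_square)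
  also have "\<dots> = mtrace d S" unfolding mtrace_def by (intro sum.cong refl) (simp add: S_def)
  finally show "expectation (T 0) = mtrace d S" .
qed

lemma trace_squared_le_m2:
  assumes T2: "integrable M (\<lambda>\<omega>. (T 0 \<omega>)\<^sup>2)"
  shows "(mtrace d S)\<^sup>2 \<le> m2"
proof -
  define f1 where "f1 = mtrace d S"
  have "0 \<le> expectation (\<lambda>\<omega>. (T 0 \<omega> - f1)\<^sup>2)" by simp
  also have "(\<lambda>\<omega>. (T 0 \<omega> - f1)\<^sup>2) = (\<lambda>\<omega>. ((T 0 \<omega>)\<^sup>2 - 2 * f1 * T 0 \<omega>) + f1\<^sup>2)"
    by (auto simp: fun_eq_iff power2_eq_square algebra_simps)
  finally show "f1\<^sup>2 \<le> m2" unfolding f1_def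
    using T2 T_expectation by (simp add: prob_space power2_eq_square)
qed

lemma fourth_moment_bounds:
  assumes W4: "integrable M (\<lambda>\<omega>. ((T 0 \<omega> - mtrace d S) / fnorm d S) ^ 4)"
  shows "integrable M (\<lambda>\<omega>. (T 0 \<omega>) ^ 4)"
    and "m4 \<le> 8 * (mtrace d S) ^ 4
               + 8 * (fnorm d S) ^ 4 * expectation (\<lambda>\<omega>. ((T 0 \<omega> - mtrace d S) / fnorm d S) ^ 4)"
proof -
  define f1 f where "f1 = mtrace d S" and "f = fnorm d S"
  have fp: "0 < f" unfolding f_def by (rule fnorm_S_pos)
  define bound where "bound \<omega> = 8 * f1 ^ 4 + 8 * f ^ 4 * ((T 0 \<omega> - f1) / f) ^ 4" for \<omega>
  have pointwise: "(T 0 \<omega>) ^ 4 \<le> bound \<omega>" for \<omega>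
  proof -
    define w where "w = (T 0 \<omega> - f1) / f"
    have "T 0 \<omega> = f1 + f * w" using fp by (simp add: w_def)
    hence "(T 0 \<omega>) ^ 4 \<le> 8 * (f1 ^ 4 + (f * w) ^ 4)" by (metis power4_add_le)
    thus ?thesis unfolding bound_def w_def[symmetric] by (simp add: power_mult_distrib ring_distribs mult.assoc)
  qed
  have bound_int: "integrable M bound" unfolding bound_def using W4 by (simp add: f1_def f_def)
  show T4: "integrable M (\<lambda>\<omega>. (T 0 \<omega>) ^ 4)"
  proof (rule Bochner_Integration.integrable_bound[OF bound_int])
    show "(\<lambda>\<omega>. (T 0 \<omega>) ^ 4) \<in> borel_measurable M" using T_measurable[OF n_pos] by measurable
    show "AE \<omega> in M. norm ((T 0 \<omega>) ^ 4) \<le> norm (bound \<omega>)"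
    proof (rule AE_I2)
      fix \<omega>
      have "0 \<le> (T 0 \<omega>) ^ 4" by simp
      thus "norm ((T 0 \<omega>) ^ 4) \<le> norm (bound \<omega>)" using pointwise[of \<omega>] by simp
    qed
  qed
  have "m4 \<le> expectation bound" using T4 bound_int pointwise by (intro integral_mono) auto
  also have "expectation bound = 8 * f1 ^ 4 + 8 * f ^ 4 * expectation (\<lambda>\<omega>. ((T 0 \<omega> - f1) / f) ^ 4)"
    unfolding bound_def using W4 by (simp add: prob_space f1_def f_def)
  finally show "m4 \<le> 8 * (mtrace d S) ^ 4
               + 8 * (fnorm d S) ^ 4 * expectation (\<lambda>\<omega>. ((T 0 \<omega> - mtrace d S) / fnorm d S) ^ 4)"
    unfolding f1_def f_def .
qed

definition offdiag :: "'a \<Rightarrow> real" where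
  "offdiag \<omega> = (\<Sum>i<n. \<Sum>l<n. if i = l then 0 else (gram d (\<lambda>i. Xs i \<omega>) i l)\<^sup>2)"

lemma gram_measurable: "i < n \<Longrightarrow> l < n \<Longrightarrow> (\<lambda>\<omega>. gram d (\<lambda>i. Xs i \<omega>) i l) \<in> borel_measurable M"
  unfolding gram_def by (intro borel_measurable_sum borel_measurable_times coordinate_measurable) auto

lemma offdiag_measurable: "offdiag \<in> borel_measurable M"
  unfolding offdiag_def
proof (intro borel_measurable_sum)
  fix i l assume "i \<in> {..<n}" "l \<in> {..<n}"
  thus "(\<lambda>\<omega>. if i = l then 0 else (gram d (\<lambda>i. Xs i \<omega>) i l)\<^sup>2) \<in> borel_measurable M"
    using gram_measurable[of i l] by (cases "i = l") auto
qed

(* For i <> l, independence gives E (X_i^T X_l)^2 = sum_{j,k} S_jk^2 = f^2. *)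
lemma gram_offdiag_moment:
  assumes i: "i < n" and l: "l < n" and il: "i \<noteq> l"
  shows "integrable M (\<lambda>\<omega>. (gram d (\<lambda>i. Xs i \<omega>) i l)\<^sup>2)"
    and "expectation (\<lambda>\<omega>. (gram d (\<lambda>i. Xs i \<omega>) i l)\<^sup>2) = (fnorm d S)\<^sup>2"
proof -
  have expand: "(gram d (\<lambda>i. Xs i \<omega>) i l)\<^sup>2
      = (\<Sum>j<d. \<Sum>k<d. (Xs i \<omega> j * Xs i \<omega> k) * (Xs l \<omega> j * Xs l \<omega> k))" for \<omega>
    unfolding gram_def by (rule square_sum_products)
  have summand: "integrable M (\<lambda>\<omega>. (Xs i \<omega> j * Xs i \<omega> k) * (Xs l \<omega> j * Xs l \<omega> k))"
    "expectation (\<lambda>\<omega>. (Xs i \<omega> j * Xs i \<omega> k) * (Xs l \<omega> j * Xs l \<omega> k)) = (S j k)\<^sup>2"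
    if jk: "j \<in> {..<d}" "k \<in> {..<d}" for j k
  proof -
    have jk': "j < d" "k < d" using jk by auto
    have ind: "indep_vars (\<lambda>_. borel) (\<lambda>m \<omega>. V m \<omega> j * V m \<omega> k) {i, l}"
      using functional_indep[OF product_measurable[OF jk'], of "{i, l}"] i l by simp
    have intm: "integrable M (\<lambda>\<omega>. V m \<omega> j * V m \<omega> k)" if "m \<in> {i, l}" for m
      using products_moment(1)[OF jk'] that i l jk' by auto
    have "expectation (\<lambda>\<omega>. \<Prod>m\<in>{i, l}. V m \<omega> j * V m \<omega> k)
        = (\<Prod>m\<in>{i, l}. expectation (\<lambda>\<omega>. V m \<omega> j * V m \<omega> k))"
      by (rule indep_vars_lebesgue_integral[OF _ ind intm]) auto
    moreover have "integrable M (\<lambda>\<omega>. \<Prod>m\<in>{i, l}. V m \<omega> j * V m \<omega> k)"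
      by (rule indep_vars_integrable[OF _ ind intm]) auto
    ultimately show "integrable M (\<lambda>\<omega>. (Xs i \<omega> j * Xs i \<omega> k) * (Xs l \<omega> j * Xs l \<omega> k))"
      "expectation (\<lambda>\<omega>. (Xs i \<omega> j * Xs i \<omega> k) * (Xs l \<omega> j * Xs l \<omega> k)) = (S j k)\<^sup>2"
      using il jk' products_moment(2)[OF jk' i] products_moment(2)[OF jk' l]
      by (simp_all add: power2_eq_square)
  qed
  show "integrable M (\<lambda>\<omega>. (gram d (\<lambda>i. Xs i \<omega>) i l)\<^sup>2)"
    unfolding expand by (rule integrable_double_sum(1)) (rule summand(1))
  have "expectation (\<lambda>\<omega>. (gram d (\<lambda>i. Xs i \<omega>) i l)\<^sup>2)
      = (\<Sum>j<d. \<Sum>k<d. expectation (\<lambda>\<omega>. (Xs i \<omega> j * Xs i \<omega> k) * (Xs l \<omega> j * Xs l \<omega> k)))"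
    unfolding expand by (rule integrable_double_sum(2)) (rule summand(1))
  also have "\<dots> = (fnorm d S)\<^sup>2" unfolding fnorm_S_squared using summand(2) by (intro sum.cong refl) auto
  finally show "expectation (\<lambda>\<omega>. (gram d (\<lambda>i. Xs i \<omega>) i l)\<^sup>2) = (fnorm d S)\<^sup>2" .
qed

lemma offdiag_nonneg: "0 \<le> offdiag \<omega>"
  unfolding offdiag_def by (intro sum_nonneg) auto

lemma offdiag_moment: "integrable M offdiag" "expectation offdiag \<le> (real n)\<^sup>2 * (fnorm d S)\<^sup>2"
proof -
  have summand: "integrable M (\<lambda>\<omega>. if i = l then 0 else (gram d (\<lambda>i. Xs i \<omega>) i l)\<^sup>2)"
    if "i \<in> {..<n}" "l \<in> {..<n}" for i l
    using gram_offdiag_moment(1)[of i l] that by (cases "i = l") auto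
  show "integrable M offdiag" unfolding offdiag_def by (rule integrable_double_sum(1)) (rule summand)
  have "expectation offdiag
      = (\<Sum>i<n. \<Sum>l<n. expectation (\<lambda>\<omega>. if i = l then 0 else (gram d (\<lambda>i. Xs i \<omega>) i l)\<^sup>2))"
    unfolding offdiag_def by (rule integrable_double_sum(2)) (rule summand)
  also have "\<dots> \<le> (\<Sum>i<n. \<Sum>l<n. (fnorm d S)\<^sup>2)"
  proof (intro sum_mono)
    fix i l assume "i \<in> {..<n}" "l \<in> {..<n}"
    thus "expectation (\<lambda>\<omega>. if i = l then 0 else (gram d (\<lambda>i. Xs i \<omega>) i l)\<^sup>2) \<le> (fnorm d S)\<^sup>2"
      using gram_offdiag_moment(2)[of i l] by (cases "i = l") auto
  qed
  also have "\<dots> = (real n)\<^sup>2 * (fnorm d S)\<^sup>2" by (simp add: power2_eq_square)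
  finally show "expectation offdiag \<le> (real n)\<^sup>2 * (fnorm d S)\<^sup>2" .
qed

lemma sum_T_squared_deviation_event:
  assumes T2: "integrable M (\<lambda>\<omega>. (T 0 \<omega>)\<^sup>2)" and T4: "integrable M (\<lambda>\<omega>. (T 0 \<omega>) ^ 4)"
    and c: "0 < c"
  shows "measure M {\<omega> \<in> space M. c\<^sup>2 \<le> (\<Sum>i<n. (T i \<omega>)\<^sup>2 - m2)\<^sup>2} \<le> real n * m4 / c\<^sup>2"
proof -
  define Z where "Z \<omega> = (\<Sum>i<n. (T i \<omega>)\<^sup>2 - m2)" for \<omega>
  have g: "(\<lambda>v. (sqlen v)\<^sup>2) \<in> borel_measurable (vecspace d)" using sqlen_measurable by measurable
  have g2: "integrable M (\<lambda>\<omega>. ((sqlen (V 0 \<omega>))\<^sup>2)\<^sup>2)" using T4 unfolding T_eq_sqlen by simp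
  note var = functional_sum_variance[OF g g2]
  have Z_eq: "Z = (\<lambda>\<omega>. \<Sum>i<n. (sqlen (V i \<omega>))\<^sup>2 - expectation (\<lambda>\<omega>. (sqlen (V 0 \<omega>))\<^sup>2))"
    unfolding Z_def T_eq_sqlen ..
  have m2_eq: "expectation (\<lambda>\<omega>. (sqlen (V 0 \<omega>))\<^sup>2) = m2" by (simp add: T_eq_sqlen)
  have m4_eq: "expectation (\<lambda>\<omega>. ((sqlen (V 0 \<omega>))\<^sup>2)\<^sup>2) = m4" by (simp add: T_eq_sqlen)
  have Z_int: "integrable M (\<lambda>\<omega>. (Z \<omega>)\<^sup>2)" using var(1) unfolding Z_eq .
  have Z_var: "expectation (\<lambda>\<omega>. (Z \<omega>)\<^sup>2) = real n * (m4 - m2\<^sup>2)"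
    using var(2) unfolding Z_eq m2_eq m4_eq .
  have "measure M {\<omega> \<in> space M. c\<^sup>2 \<le> (Z \<omega>)\<^sup>2} \<le> expectation (\<lambda>\<omega>. (Z \<omega>)\<^sup>2) / c\<^sup>2"
    using Z_int borel_measurable_integrable[OF Z_int] c by (intro Markov) auto
  also have "\<dots> \<le> real n * m4 / c\<^sup>2" unfolding Z_var using c by (intro divide_right_mono mult_left_mono) auto
  finally show ?thesis unfolding Z_def .
qed

lemma large_T_event:
  assumes T2: "integrable M (\<lambda>\<omega>. (T 0 \<omega>)\<^sup>2)" and T4: "integrable M (\<lambda>\<omega>. (T 0 \<omega>) ^ 4)"
    and \<beta>: "0 < \<beta>"
  shows "measure M (\<Union>i\<in>{..<n}. {\<omega> \<in> space M. \<beta> ^ 4 \<le> (T i \<omega>) ^ 4}) \<le> real n * m4 / \<beta> ^ 4"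
proof -
  have T4_meas: "(\<lambda>\<omega>. (T i \<omega>) ^ 4) \<in> borel_measurable M" if "i < n" for i
    using T_measurable[OF that] by measurable
  have "measure M (\<Union>i\<in>{..<n}. {\<omega> \<in> space M. \<beta> ^ 4 \<le> (T i \<omega>) ^ 4})
      \<le> (\<Sum>i\<in>{..<n}. measure M {\<omega> \<in> space M. \<beta> ^ 4 \<le> (T i \<omega>) ^ 4})"
    using T4_meas by (intro measure_UNION_le) (auto, measurable)
  also have "\<dots> \<le> (\<Sum>i\<in>{..<n}. m4 / \<beta> ^ 4)"
  proof (intro sum_mono)
    fix i assume i: "i \<in> {..<n}"
    show "measure M {\<omega> \<in> space M. \<beta> ^ 4 \<le> (T i \<omega>) ^ 4} \<le> m4 / \<beta> ^ 4"
      using Markov[OF T_moments(2)[OF T2 T4] T4_meas, of i "\<beta> ^ 4"] T_moments(4)[OF T2 T4, of i] i \<beta>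
      by auto
  qed
  finally show ?thesis by simp
qed

lemma offdiag_event:
  assumes \<beta>: "0 < \<beta>"
  shows "measure M {\<omega> \<in> space M. \<beta>\<^sup>2 \<le> offdiag \<omega>} \<le> (real n)\<^sup>2 * (fnorm d S)\<^sup>2 / \<beta>\<^sup>2"
proof -
  have "measure M {\<omega> \<in> space M. \<beta>\<^sup>2 \<le> offdiag \<omega>} \<le> expectation offdiag / \<beta>\<^sup>2"
    using offdiag_moment(1) offdiag_measurable offdiag_nonneg \<beta> by (intro Markov) auto
  also have "\<dots> \<le> (real n)\<^sup>2 * (fnorm d S)\<^sup>2 / \<beta>\<^sup>2"
    using offdiag_moment(2) \<beta> by (intro divide_right_mono) auto
  finally show ?thesis .
qed

definition exceptional :: "real \<Rightarrow> real \<Rightarrow> 'a set" where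
  "exceptional c \<beta> = {\<omega> \<in> space M. c\<^sup>2 \<le> (\<Sum>i<n. (T i \<omega>)\<^sup>2 - m2)\<^sup>2}
     \<union> (\<Union>i\<in>{..<n}. {\<omega> \<in> space M. \<beta> ^ 4 \<le> (T i \<omega>) ^ 4})
     \<union> {\<omega> \<in> space M. \<beta>\<^sup>2 \<le> offdiag \<omega>}"

lemma exceptional_measure:
  assumes T2: "integrable M (\<lambda>\<omega>. (T 0 \<omega>)\<^sup>2)" and T4: "integrable M (\<lambda>\<omega>. (T 0 \<omega>) ^ 4)"
    and c: "0 < c" and \<beta>: "0 < \<beta>"
  shows "exceptional c \<beta> \<in> sets M"
    and "measure M (exceptional c \<beta>)
           \<le> real n * m4 / c\<^sup>2 + real n * m4 / \<beta> ^ 4 + (real n)\<^sup>2 * (fnorm d S)\<^sup>2 / \<beta>\<^sup>2"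
proof -
  define E1 where "E1 = {\<omega> \<in> space M. c\<^sup>2 \<le> (\<Sum>i<n. (T i \<omega>)\<^sup>2 - m2)\<^sup>2}"
  define E2 where "E2 = (\<Union>i\<in>{..<n}. {\<omega> \<in> space M. \<beta> ^ 4 \<le> (T i \<omega>) ^ 4})"
  define E3 where "E3 = {\<omega> \<in> space M. \<beta>\<^sup>2 \<le> offdiag \<omega>}"
  have T_meas: "(\<lambda>\<omega>. T i \<omega>) \<in> borel_measurable M" if "i < n" for i using T_measurable that by simp
  have sets: "E1 \<in> sets M" "E2 \<in> sets M" "E3 \<in> sets M"
    unfolding E1_def E2_def E3_def using T_meas offdiag_measurable by measurable
  thus "exceptional c \<beta> \<in> sets M" unfolding exceptional_def E1_def E2_def E3_def by blast
  have "measure M (exceptional c \<beta>) \<le> measure M E1 + measure M E2 + measure M E3"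
    unfolding exceptional_def E1_def[symmetric] E2_def[symmetric] E3_def[symmetric]
    using sets by (meson add_right_mono measure_Un_le order_trans sets.Un)
  thus "measure M (exceptional c \<beta>)
           \<le> real n * m4 / c\<^sup>2 + real n * m4 / \<beta> ^ 4 + (real n)\<^sup>2 * (fnorm d S)\<^sup>2 / \<beta>\<^sup>2"
    unfolding E1_def E2_def E3_def
    using sum_T_squared_deviation_event[OF T2 T4 c] large_T_event[OF T2 T4 \<beta>] offdiag_event[OF \<beta>]
    by linarith
qed

(* Off the exceptional event with c = n E T^2 / 2: sum_i T_i^2 >= c, every T_i <= beta and the
   off-diagonal Gram mass is <= beta^2, hence rho(Shat / |Shat|_F) <= 2 beta / sqrt c. *)
lemma normalized_Shat_off_exceptional:
  assumes c: "c = real n * m2 / 2" "0 < c" and \<beta>: "0 < \<beta>"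
    and \<omega>: "\<omega> \<in> space M - exceptional c \<beta>"
  shows "specnorm d (\<lambda>j k. sample_cov n Xs \<omega> j k / fnorm d (sample_cov n Xs \<omega>)) \<le> 2 * \<beta> / sqrt c"
proof -
  have "\<not> c\<^sup>2 \<le> (\<Sum>i<n. (T i \<omega>)\<^sup>2 - m2)\<^sup>2" using \<omega> unfolding exceptional_def by blast
  moreover have "(\<Sum>i<n. (T i \<omega>)\<^sup>2 - m2) = (\<Sum>i<n. (T i \<omega>)\<^sup>2) - real n * m2"
    by (simp add: sum_subtractf)
  ultimately have "\<bar>(\<Sum>i<n. (T i \<omega>)\<^sup>2) - real n * m2\<bar>\<^sup>2 < c\<^sup>2" by simp
  hence "\<bar>(\<Sum>i<n. (T i \<omega>)\<^sup>2) - real n * m2\<bar> < c"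
    using less_imp_le[OF c(2)] by (rule power2_less_imp_less)
  hence many: "c \<le> (\<Sum>i<n. (gram d (\<lambda>i. Xs i \<omega>) i i)\<^sup>2)"
    unfolding gram_diag_eq_T c(1) by linarith
  have diag: "gram d (\<lambda>i. Xs i \<omega>) i i \<le> \<beta>" if "i < n" for i
  proof -
    have "\<not> \<beta> ^ 4 \<le> (T i \<omega>) ^ 4" using \<omega> that unfolding exceptional_def by auto
    hence "(T i \<omega>) ^ 4 < \<beta> ^ 4" by linarith
    thus ?thesis unfolding gram_diag_eq_T using \<beta> by (meson power_less_imp_less_base less_le)
  qed
  have offdiag: "(\<Sum>i<n. \<Sum>l<n. if i = l then 0 else (gram d (\<lambda>i. Xs i \<omega>) i l)\<^sup>2) \<le> \<beta>\<^sup>2"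
    using \<omega> unfolding exceptional_def offdiag_def by auto
  show ?thesis
    using specnorm_normalized_scov_bound[OF n_pos d_pos c(2) many diag offdiag] \<beta>
    unfolding sample_cov_eq_scov by simp
qed

lemma normalized_Shat_exceptional_set:
  assumes T2: "integrable M (\<lambda>\<omega>. (T 0 \<omega>)\<^sup>2)" and T4: "integrable M (\<lambda>\<omega>. (T 0 \<omega>) ^ 4)"
    and m2_pos: "0 < m2" and \<epsilon>: "0 < \<epsilon>"
  shows "\<exists>E\<in>sets M.
      measure M E \<le> (4 + 324 / \<epsilon> ^ 4) * (m4 / (real n * m2\<^sup>2)) + 18 / \<epsilon>\<^sup>2 * (real n * (fnorm d S)\<^sup>2 / m2)
      \<and> (\<forall>\<omega>\<in>space M - E. specnorm d (\<lambda>j k. sample_cov n Xs \<omega> j k / fnorm d (sample_cov n Xs \<omega>)) \<le> \<epsilon>)"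
proof -
  have nr: "0 < real n" using n_pos by simp
  define c where "c = real n * m2 / 2"
  have c: "0 < c" unfolding c_def using nr m2_pos by simp
  define \<beta> where "\<beta> = \<epsilon> * sqrt c / 3"
  have \<beta>: "0 < \<beta>" unfolding \<beta>_def using \<epsilon> c by simp
  note E = exceptional_measure[OF T2 T4 c \<beta>]
  have "real n * m4 / c\<^sup>2 + real n * m4 / \<beta> ^ 4 + (real n)\<^sup>2 * (fnorm d S)\<^sup>2 / \<beta>\<^sup>2
      = (4 + 324 / \<epsilon> ^ 4) * (m4 / (real n * m2\<^sup>2)) + 18 / \<epsilon>\<^sup>2 * (real n * (fnorm d S)\<^sup>2 / m2)"
  proof -
    have "(sqrt c) ^ 4 = ((sqrt c)\<^sup>2)\<^sup>2" by simp
    also have "\<dots> = c\<^sup>2" using c by simp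
    finally have b4: "\<beta> ^ 4 = \<epsilon> ^ 4 * c\<^sup>2 / 81"
      unfolding \<beta>_def by (simp add: power_mult_distrib power_divide)
    have b2: "\<beta>\<^sup>2 = \<epsilon>\<^sup>2 * c / 9" unfolding \<beta>_def using c by (simp add: power_mult_distrib power_divide)
    show ?thesis unfolding b4 b2 c_def using nr m2_pos \<epsilon> by (simp add: field_simps power2_eq_square)
  qed
  moreover have "2 * \<beta> / sqrt c \<le> \<epsilon>" unfolding \<beta>_def using c \<epsilon> by simp
  ultimately show ?thesis
    using E normalized_Shat_off_exceptional[OF c_def c \<beta>] by (intro bexI[OF _ E(1)]) force
qed

end

lemma fourth_root_bigo_power:
  fixes K :: "nat \<Rightarrow> real"
  assumes O: "(\<lambda>n. K n powr (1/4)) \<in> O(\<lambda>n. real n powr (3/4))" and K0: "\<And>n. 0 \<le> K n"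
  obtains C where "C > 0" "\<forall>\<^sub>F n in sequentially. K n \<le> C * real n ^ 3"
proof -
  obtain c where c: "c > 0"
    and ev: "\<forall>\<^sub>F n in sequentially. norm (K n powr (1/4)) \<le> c * norm (real n powr (3/4))"
    using landau_o.bigE[OF O] by blast
  have "\<forall>\<^sub>F n in sequentially. K n \<le> c ^ 4 * real n ^ 3"
    using ev eventually_gt_at_top[of 0]
  proof eventually_elim
    case (elim n)
    have "K n = (K n powr (1/4)) ^ 4"
      using K0[of n] by (cases "K n = 0") (simp_all add: powr_power)
    also have "\<dots> \<le> (c * real n powr (3/4)) ^ 4" using elim by (intro power_mono) auto
    also have "\<dots> = c ^ 4 * real n ^ 3"
    proof -
      have "(real n powr (3/4)) ^ 4 = real n powr (of_nat 4 * (3/4))"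
        using elim by (intro powr_power) simp
      also have "\<dots> = real n ^ 3" using elim by (simp add: powr_realpow)
      finally show ?thesis by (simp add: power_mult_distrib)
    qed
    finally show ?case .
  qed
  thus ?thesis by (rule that[OF zero_less_power[OF c]])
qed

lemma fourth_moment_ratio_bound:
  fixes n :: nat and m2 m4 f1 f K C :: real
  assumes n: "0 < n" and m2: "0 < m2" and f1: "f1\<^sup>2 \<le> m2"
    and m4: "m4 \<le> 8 * f1 ^ 4 + 8 * f ^ 4 * K" and K: "K \<le> C * real n ^ 3" and C: "0 \<le> C"
  shows "m4 / (real n * m2\<^sup>2) \<le> 8 / real n + 8 * C * (real n * f\<^sup>2 / m2)\<^sup>2"
proof -
  have nr: "0 < real n" using n by simp
  have "f1 ^ 4 \<le> m2\<^sup>2" using power_mono[OF f1, of 2] by simp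
  moreover have "f ^ 4 * K \<le> f ^ 4 * (C * real n ^ 3)" using K by (intro mult_left_mono) auto
  ultimately have "m4 \<le> 8 * m2\<^sup>2 + 8 * C * (real n ^ 3 * f ^ 4)" using m4 by (simp add: algebra_simps)
  hence "m4 / (real n * m2\<^sup>2) \<le> (8 * m2\<^sup>2 + 8 * C * (real n ^ 3 * f ^ 4)) / (real n * m2\<^sup>2)"
    using nr m2 by (intro divide_right_mono) auto
  also have "\<dots> = 8 / real n + 8 * C * (real n * f\<^sup>2 / m2)\<^sup>2"
    using nr m2 by (simp add: field_simps power2_eq_square power3_eq_cube power4_eq_xxxx)
  finally show ?thesis .
qed

lemma fourth_moment_ratio_tendsto_zero:
  fixes m2 m4 f1 f K :: "nat \<Rightarrow> real"
  assumes K_growth: "(\<lambda>n. K n powr (1/4)) \<in> O(\<lambda>n. real n powr (3/4))" and K0: "\<And>n. 0 \<le> K n"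
    and m4_nonneg: "\<And>n. 0 \<le> m4 n" and moments: "\<forall>\<^sub>F n in sequentially.
        0 < m2 n \<and> (f1 n)\<^sup>2 \<le> m2 n \<and> m4 n \<le> 8 * (f1 n) ^ 4 + 8 * (f n) ^ 4 * K n"
    and r: "(\<lambda>n. real n * (f n)\<^sup>2 / m2 n) \<longlonglongrightarrow> 0"
  shows "(\<lambda>n. m4 n / (real n * (m2 n)\<^sup>2)) \<longlonglongrightarrow> 0"
proof -
  obtain C where C: "C > 0" and K_le: "\<forall>\<^sub>F n in sequentially. K n \<le> C * real n ^ 3"
    using fourth_root_bigo_power[OF K_growth K0] by blast
  have upper: "(\<lambda>n. 8 / real n + 8 * C * (real n * (f n)\<^sup>2 / m2 n)\<^sup>2) \<longlonglongrightarrow> 0"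
    using tendsto_add[OF lim_const_over_n[of 8] tendsto_mult[OF tendsto_const[of "8 * C"] tendsto_power[OF r, of 2]]]
    by simp
  show ?thesis
  proof (rule tendsto_sandwich[OF _ _ tendsto_const upper])
    show "\<forall>\<^sub>F n in sequentially. 0 \<le> m4 n / (real n * (m2 n)\<^sup>2)"
      using m4_nonneg by (intro always_eventually allI divide_nonneg_nonneg) auto
    show "\<forall>\<^sub>F n in sequentially. m4 n / (real n * (m2 n)\<^sup>2)
        \<le> 8 / real n + 8 * C * (real n * (f n)\<^sup>2 / m2 n)\<^sup>2"
      using moments K_le eventually_gt_at_top[of 0]
    proof eventually_elim
      case (elim n)
      then show ?case using fourth_moment_ratio_bound[OF elim(3)] C by auto
    qed
  qed
qed

lemma conv_prob_zero_of_measure_bound: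
  assumes a: "a \<longlonglongrightarrow> 0"
    and bound: "\<And>e n. 0 < e \<Longrightarrow> 0 < n \<Longrightarrow>
       measure (M n) {\<omega> \<in> space (M n). e < \<bar>Y n \<omega>\<bar>} \<le> a n / e\<^sup>2"
  shows "conv_prob_zero M Y"
  unfolding conv_prob_zero_def
proof (intro allI impI)
  fix e :: real assume e: "0 < e"
  show "(\<lambda>n. measure (M n) {\<omega> \<in> space (M n). e < \<bar>Y n \<omega>\<bar>}) \<longlonglongrightarrow> 0"
  proof (rule tendsto_sandwich[OF _ _ tendsto_const])
    show "\<forall>\<^sub>F n in sequentially. 0 \<le> measure (M n) {\<omega> \<in> space (M n). e < \<bar>Y n \<omega>\<bar>}" by simp
    show "\<forall>\<^sub>F n in sequentially. measure (M n) {\<omega> \<in> space (M n). e < \<bar>Y n \<omega>\<bar>} \<le> a n / e\<^sup>2"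
      using eventually_gt_at_top[of 0] by eventually_elim (rule bound[OF e])
    show "(\<lambda>n. a n / e\<^sup>2) \<longlonglongrightarrow> 0" using tendsto_divide_zero[OF a] by simp
  qed
qed

lemma conv_prob_zero_of_exceptional_sets:
  assumes prob: "\<And>n. 0 < n \<Longrightarrow> prob_space (M n)"
    and exc: "\<And>e. 0 < e \<Longrightarrow> \<exists>G. G \<longlonglongrightarrow> 0 \<and> (\<forall>\<^sub>F n in sequentially. \<exists>E\<in>sets (M n).
        measure (M n) E \<le> G n \<and> (\<forall>\<omega>\<in>space (M n) - E. \<bar>Y n \<omega>\<bar> \<le> e))"
  shows "conv_prob_zero M Y"
  unfolding conv_prob_zero_def
proof (intro allI impI)
  fix e :: real assume e: "0 < e"
  obtain G where G: "G \<longlonglongrightarrow> 0" and sets: "\<forall>\<^sub>F n in sequentially. \<exists>E\<in>sets (M n).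
      measure (M n) E \<le> G n \<and> (\<forall>\<omega>\<in>space (M n) - E. \<bar>Y n \<omega>\<bar> \<le> e)"
    using exc[OF e] by blast
  show "(\<lambda>n. measure (M n) {\<omega> \<in> space (M n). e < \<bar>Y n \<omega>\<bar>}) \<longlonglongrightarrow> 0"
  proof (rule tendsto_sandwich[OF _ _ tendsto_const G])
    show "\<forall>\<^sub>F n in sequentially. 0 \<le> measure (M n) {\<omega> \<in> space (M n). e < \<bar>Y n \<omega>\<bar>}" by simp
    show "\<forall>\<^sub>F n in sequentially. measure (M n) {\<omega> \<in> space (M n). e < \<bar>Y n \<omega>\<bar>} \<le> G n"
      using sets eventually_gt_at_top[of 0]
    proof eventually_elim
      case (elim n)
      then obtain E where E: "E \<in> sets (M n)" "measure (M n) E \<le> G n"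
        "\<forall>\<omega>\<in>space (M n) - E. \<bar>Y n \<omega>\<bar> \<le> e" by blast
      interpret P: prob_space "M n" using prob elim(2) .
      have "{\<omega> \<in> space (M n). e < \<bar>Y n \<omega>\<bar>} \<subseteq> E"
      proof
        fix \<omega> assume \<omega>: "\<omega> \<in> {\<omega> \<in> space (M n). e < \<bar>Y n \<omega>\<bar>}"
        show "\<omega> \<in> E"
        proof (rule ccontr)
          assume "\<omega> \<notin> E"
          hence "\<bar>Y n \<omega>\<bar> \<le> e" using E(3) \<omega> by blast
          thus False using \<omega> by simp
        qed
      qed
      hence "measure (M n) {\<omega> \<in> space (M n). e < \<bar>Y n \<omega>\<bar>} \<le> measure (M n) E"
        by (rule P.measure_le_subset[OF E(1)])
      thus ?case using E(2) by linarith
    qed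
  qed
qed

lemma conv_prob_zero_dominated:
  assumes prob: "\<And>n. 0 < n \<Longrightarrow> prob_space (M n)"
    and Z: "conv_prob_zero M Z" and Z_meas: "\<And>n. 0 < n \<Longrightarrow> Z n \<in> borel_measurable (M n)"
    and c: "c \<longlonglongrightarrow> 0"
    and dom: "\<And>n \<omega>. 0 < n \<Longrightarrow> \<omega> \<in> space (M n) \<Longrightarrow> \<bar>Y n \<omega>\<bar> \<le> \<bar>Z n \<omega>\<bar> + c n"
  shows "conv_prob_zero M Y"
  unfolding conv_prob_zero_def
proof (intro allI impI)
  fix e :: real assume e: "0 < e"
  have e2: "0 < e / 2" using e by simp
  note Z_small = Z[unfolded conv_prob_zero_def, rule_format, OF e2]
  show "(\<lambda>n. measure (M n) {\<omega> \<in> space (M n). e < \<bar>Y n \<omega>\<bar>}) \<longlonglongrightarrow> 0"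
  proof (rule tendsto_sandwich[OF _ _ tendsto_const Z_small])
    show "\<forall>\<^sub>F n in sequentially. 0 \<le> measure (M n) {\<omega> \<in> space (M n). e < \<bar>Y n \<omega>\<bar>}" by simp
    show "\<forall>\<^sub>F n in sequentially. measure (M n) {\<omega> \<in> space (M n). e < \<bar>Y n \<omega>\<bar>}
        \<le> measure (M n) {\<omega> \<in> space (M n). e / 2 < \<bar>Z n \<omega>\<bar>}"
      using order_tendstoD(2)[OF c e2] eventually_gt_at_top[of 0]
    proof eventually_elim
      case (elim n)
      interpret P: prob_space "M n" using prob elim(2) .
      have "{\<omega> \<in> space (M n). e < \<bar>Y n \<omega>\<bar>} \<subseteq> {\<omega> \<in> space (M n). e / 2 < \<bar>Z n \<omega>\<bar>}"
        using dom[OF elim(2)] elim(1) by fastforce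
      moreover have "{\<omega> \<in> space (M n). e / 2 < \<bar>Z n \<omega>\<bar>} \<in> sets (M n)"
        using Z_meas[OF elim(2)] by measurable
      ultimately show ?case using P.measure_le_subset by blast
    qed
  qed
qed

lemma (in prob_space) outside_two_events:
  assumes sets: "A \<in> events" "B \<in> events" and small: "prob A + prob B < 1"
  shows "\<exists>\<omega>\<in>space M. \<omega> \<notin> A \<and> \<omega> \<notin> B"
proof (rule ccontr)
  assume "\<not> (\<exists>\<omega>\<in>space M. \<omega> \<notin> A \<and> \<omega> \<notin> B)"
  hence "space M \<subseteq> A \<union> B" by blast
  hence "prob (space M) \<le> prob (A \<union> B)" using sets by (intro finite_measure_mono) auto
  thus False using measure_Un_le[OF sets] small prob_space by linarith
qed

(* A deterministic sequence bounded by |Y_n| + |Z_n| with Y_n, Z_n ->P 0 tends to 0: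
   for large n some outcome has both |Y_n| and |Z_n| small. *)
lemma tendsto_zero_of_conv_prob_bound:
  assumes prob: "\<And>n. 0 < n \<Longrightarrow> prob_space (M n)"
    and Y: "conv_prob_zero M Y" and Y_meas: "\<And>n. 0 < n \<Longrightarrow> Y n \<in> borel_measurable (M n)"
    and Z: "conv_prob_zero M Z" and Z_meas: "\<And>n. 0 < n \<Longrightarrow> Z n \<in> borel_measurable (M n)"
    and c0: "\<And>n. 0 < n \<Longrightarrow> 0 \<le> c n"
    and bound: "\<And>n \<omega>. 0 < n \<Longrightarrow> \<omega> \<in> space (M n) \<Longrightarrow> c n \<le> \<bar>Y n \<omega>\<bar> + \<bar>Z n \<omega>\<bar>"
  shows "c \<longlonglongrightarrow> 0"
proof (rule order_tendstoI)
  fix a :: real assume "a < 0"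
  show "\<forall>\<^sub>F n in sequentially. a < c n"
    using eventually_gt_at_top[of 0]
  proof eventually_elim
    case (elim n)
    show ?case using c0[OF elim] \<open>a < 0\<close> by linarith
  qed
next
  fix e :: real assume e: "0 < e"
  define BY BZ where "BY n = {\<omega> \<in> space (M n). e / 3 < \<bar>Y n \<omega>\<bar>}"
    and "BZ n = {\<omega> \<in> space (M n). e / 3 < \<bar>Z n \<omega>\<bar>}" for n
  have e3: "0 < e / 3" using e by simp
  have "\<forall>\<^sub>F n in sequentially. measure (M n) (BY n) < 1/2" "\<forall>\<^sub>F n in sequentially. measure (M n) (BZ n) < 1/2"
    unfolding BY_def BZ_def
    using order_tendstoD(2)[OF Y[unfolded conv_prob_zero_def, rule_format, OF e3], of "1/2"]
      order_tendstoD(2)[OF Z[unfolded conv_prob_zero_def, rule_format, OF e3], of "1/2"]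
    by simp_all
  thus "\<forall>\<^sub>F n in sequentially. c n < e"
    using eventually_gt_at_top[of 0]
  proof eventually_elim
    case (elim n)
    have sets: "BY n \<in> sets (M n)" "BZ n \<in> sets (M n)"
      unfolding BY_def BZ_def using Y_meas[OF elim(3)] Z_meas[OF elim(3)] by measurable
    obtain \<omega> where "\<omega> \<in> space (M n)" "\<omega> \<notin> BY n" "\<omega> \<notin> BZ n"
      using prob_space.outside_two_events[OF prob[OF elim(3)] sets] elim(1,2) by force
    hence "c n \<le> e / 3 + e / 3" using bound[OF elim(3)] unfolding BY_def BZ_def by fastforce
    thus ?case using e by linarith
  qed
qed

locale iid_array =
  fixes M :: "nat \<Rightarrow> 'a measure" and p :: "nat \<Rightarrow> nat"
    and X :: "nat \<Rightarrow> nat \<Rightarrow> 'a \<Rightarrow> nat \<Rightarrow> real" and \<Sigma> :: "nat \<Rightarrow> nat \<Rightarrow> nat \<Rightarrow> real"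
  assumes model: "iid_model M p X \<Sigma>"
begin

abbreviation f :: "nat \<Rightarrow> real" where
  "f n \<equiv> fnorm (p n) (\<Sigma> n)"

abbreviation T :: "nat \<Rightarrow> nat \<Rightarrow> 'a \<Rightarrow> real" where
  "T n i \<omega> \<equiv> vdot (p n) (X n i \<omega>) (X n i \<omega>)"

abbreviation mom2 :: "nat \<Rightarrow> real" where
  "mom2 n \<equiv> integral\<^sup>L (M n) (\<lambda>\<omega>. (T n 0 \<omega>)\<^sup>2)"

abbreviation mom4 :: "nat \<Rightarrow> real" where
  "mom4 n \<equiv> integral\<^sup>L (M n) (\<lambda>\<omega>. (T n 0 \<omega>) ^ 4)"

(* K_2^4 = E ((X^T X - f_1) / f)^4 *)
abbreviation K4 :: "nat \<Rightarrow> real" where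
  "K4 n \<equiv> integral\<^sup>L (M n) (\<lambda>\<omega>. ((T n 0 \<omega> - mtrace (p n) (\<Sigma> n)) / f n) ^ 4)"

abbreviation rho_normalized :: "nat \<Rightarrow> 'a \<Rightarrow> real" where
  "rho_normalized n \<omega> \<equiv> specnorm (p n) (\<lambda>j k. sample_cov n (X n) \<omega> j k / fnorm (p n) (sample_cov n (X n) \<omega>))"

abbreviation rho_diff :: "nat \<Rightarrow> 'a \<Rightarrow> real" where
  "rho_diff n \<omega> \<equiv> specnorm (p n) (norm_diff (p n) n (X n) (\<Sigma> n) \<omega>)"

lemma sample: "0 < n \<Longrightarrow> iid_sample (M n) n (p n) (X n) (\<Sigma> n)"
  by (rule iid_model_sample[OF model])

lemma prob: "0 < n \<Longrightarrow> prob_space (M n)"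
  using iid_sample.axioms(1)[OF sample] .

lemma dim_pos: "0 < n \<Longrightarrow> 0 < p n"
  using iid_sample.d_pos[OF sample] .

lemma f_pos: "0 < n \<Longrightarrow> 0 < f n"
  using iid_sample.fnorm_S_pos[OF sample] .

theorem normalized_sample_cov_consistent:
  assumes T2: "\<forall>n>0. integrable (M n) (\<lambda>\<omega>. (T n 0 \<omega>)\<^sup>2)"
    and small: "(\<lambda>n. mom2 n) \<in> o(\<lambda>n. real n * (f n)\<^sup>2)"
  shows "(\<lambda>n. integral\<^sup>L (M n) (\<lambda>\<omega>. (frob (p n) (norm_diff (p n) n (X n) (\<Sigma> n) \<omega>))\<^sup>2)) \<longlonglongrightarrow> 0"
    and "conv_prob_zero M rho_diff"
proof -
  define a where "a n = 4 * (mom2 n / (real n * (f n)\<^sup>2))" for n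
  have a: "a \<longlonglongrightarrow> 0" unfolding a_def using tendsto_mult_right_zero[OF smalloD_tendsto[OF small]] .
  have mse_bound:
    "integral\<^sup>L (M n) (\<lambda>\<omega>. (frob (p n) (norm_diff (p n) n (X n) (\<Sigma> n) \<omega>))\<^sup>2) \<le> a n" if n: "0 < n" for n
    using iid_sample.consistency_bounds(1)[OF sample[OF n] T2[rule_format, OF n]] by (simp add: a_def)
  have prob_bound: "measure (M n) {\<omega> \<in> space (M n). e < \<bar>rho_diff n \<omega>\<bar>} \<le> a n / e\<^sup>2"
    if e: "0 < e" and n: "0 < n" for e n
    using iid_sample.consistency_bounds(2)[OF sample[OF n] T2[rule_format, OF n] e]
    by (simp add: a_def field_simps)
  show "(\<lambda>n. integral\<^sup>L (M n) (\<lambda>\<omega>. (frob (p n) (norm_diff (p n) n (X n) (\<Sigma> n) \<omega>))\<^sup>2)) \<longlonglongrightarrow> 0"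
  proof (rule tendsto_sandwich[OF _ _ tendsto_const a])
    show "\<forall>\<^sub>F n in sequentially.
        integral\<^sup>L (M n) (\<lambda>\<omega>. (frob (p n) (norm_diff (p n) n (X n) (\<Sigma> n) \<omega>))\<^sup>2) \<le> a n"
      using eventually_gt_at_top[of 0] by eventually_elim (rule mse_bound)
  qed simp
  show "conv_prob_zero M rho_diff"
    using a prob_bound by (rule conv_prob_zero_of_measure_bound)
qed

lemma mom2_eventually_pos:
  assumes large: "(\<lambda>n. real n * (f n)\<^sup>2) \<in> o(\<lambda>n. mom2 n)"
  shows "\<forall>\<^sub>F n in sequentially. 0 < mom2 n"
proof -
  have "\<forall>\<^sub>F n in sequentially. norm (real n * (f n)\<^sup>2) \<le> 1/2 * norm (mom2 n)"
    by (rule landau_o.smallD[OF large]) simp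
  thus ?thesis
    using eventually_gt_at_top[of 0]
  proof eventually_elim
    case (elim n)
    have "0 < real n * (f n)\<^sup>2" using f_pos[OF elim(2)] elim(2) by simp
    thus ?case using elim(1) by simp
  qed
qed

(* The fourth-moment ratio E (X^T X)^4 / (n (E (X^T X)^2)^2) tends to zero, via
   E T^4 <= 8 f_1^4 + 8 f^4 K_2^4, f_1^2 <= E T^2 and K_2^4 = O(n^3). *)
lemma fourth_moment_ratio_vanishes:
  assumes T2: "\<forall>n>0. integrable (M n) (\<lambda>\<omega>. (T n 0 \<omega>)\<^sup>2)"
    and large: "(\<lambda>n. real n * (f n)\<^sup>2) \<in> o(\<lambda>n. mom2 n)"
    and W4: "\<forall>n>0. integrable (M n) (\<lambda>\<omega>. ((T n 0 \<omega> - mtrace (p n) (\<Sigma> n)) / f n) ^ 4)"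
    and K_growth: "(\<lambda>n. K4 n powr (1/4)) \<in> O(\<lambda>n. real n powr (3/4))"
  shows "(\<lambda>n. mom4 n / (real n * (mom2 n)\<^sup>2)) \<longlonglongrightarrow> 0"
proof (rule fourth_moment_ratio_tendsto_zero[OF K_growth])
  show "\<forall>\<^sub>F n in sequentially. 0 < mom2 n \<and> (mtrace (p n) (\<Sigma> n))\<^sup>2 \<le> mom2 n
      \<and> mom4 n \<le> 8 * (mtrace (p n) (\<Sigma> n)) ^ 4 + 8 * (f n) ^ 4 * K4 n"
    using mom2_eventually_pos[OF large] eventually_gt_at_top[of 0]
  proof eventually_elim
    case (elim n)
    show ?case
      using elim(1) iid_sample.trace_squared_le_m2[OF sample[OF elim(2)] T2[rule_format, OF elim(2)]]
        iid_sample.fourth_moment_bounds(2)[OF sample[OF elim(2)] W4[rule_format, OF elim(2)]]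
      by simp
  qed
  show "(\<lambda>n. real n * (f n)\<^sup>2 / mom2 n) \<longlonglongrightarrow> 0" by (rule smalloD_tendsto[OF large])
qed simp_all

(* Part (ii), first claim: if n f^2 = o(E (X^T X)^2) and K_2 = O(n^(3/4)) then
   rho(Shat/fhat) ->P 0; the exceptional events of the single-sample bound have
   probability O(E T^4 / (n (E T^2)^2) + n f^2 / E T^2) -> 0. *)
theorem normalized_sample_cov_specnorm_vanishes:
  assumes T2: "\<forall>n>0. integrable (M n) (\<lambda>\<omega>. (T n 0 \<omega>)\<^sup>2)"
    and large: "(\<lambda>n. real n * (f n)\<^sup>2) \<in> o(\<lambda>n. mom2 n)"
    and W4: "\<forall>n>0. integrable (M n) (\<lambda>\<omega>. ((T n 0 \<omega> - mtrace (p n) (\<Sigma> n)) / f n) ^ 4)"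
    and K_growth: "(\<lambda>n. K4 n powr (1/4)) \<in> O(\<lambda>n. real n powr (3/4))"
  shows "conv_prob_zero M rho_normalized"
proof (rule conv_prob_zero_of_exceptional_sets[OF prob])
  fix \<epsilon> :: real assume \<epsilon>: "0 < \<epsilon>"
  define G where "G n = (4 + 324 / \<epsilon> ^ 4) * (mom4 n / (real n * (mom2 n)\<^sup>2))
                         + 18 / \<epsilon>\<^sup>2 * (real n * (f n)\<^sup>2 / mom2 n)" for n
  have "G \<longlonglongrightarrow> 0"
    unfolding G_def using fourth_moment_ratio_vanishes[OF T2 large W4 K_growth] smalloD_tendsto[OF large]
    by (intro tendsto_add_zero tendsto_mult_right_zero)
  moreover have "\<forall>\<^sub>F n in sequentially. \<exists>E\<in>sets (M n). measure (M n) E \<le> G n \<and>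
      (\<forall>\<omega>\<in>space (M n) - E. \<bar>rho_normalized n \<omega>\<bar> \<le> \<epsilon>)"
    using mom2_eventually_pos[OF large] eventually_gt_at_top[of 0]
  proof eventually_elim
    case (elim n)
    note T4 = iid_sample.fourth_moment_bounds(1)[OF sample[OF elim(2)] W4[rule_format, OF elim(2)]]
    show ?case
      using iid_sample.normalized_Shat_exceptional_set[OF sample[OF elim(2)] T2[rule_format, OF elim(2)] T4
          elim(1) \<epsilon>] specnorm_nonneg[OF dim_pos[OF elim(2)]]
      unfolding G_def by auto
  qed
  ultimately show "\<exists>G. G \<longlonglongrightarrow> 0 \<and> (\<forall>\<^sub>F n in sequentially. \<exists>E\<in>sets (M n). measure (M n) E \<le> G n \<and>
      (\<forall>\<omega>\<in>space (M n) - E. \<bar>rho_normalized n \<omega>\<bar> \<le> \<epsilon>))"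
    by blast
qed

(* Part (ii), second claim: once rho(Shat/fhat) ->P 0, the normalised difference vanishes in
   probability exactly when rho(S) = o(f), because
   |rho(Shat/fhat - S/f) - rho(S)/f| <= rho(Shat/fhat). *)
theorem norm_diff_vanishes_iff:
  assumes normalized: "conv_prob_zero M rho_normalized"
  shows "conv_prob_zero M rho_diff \<longleftrightarrow> (\<lambda>n. specnorm (p n) (\<Sigma> n)) \<in> o(\<lambda>n. f n)"
proof -
  define Sf where "Sf n \<omega> = (\<lambda>j k. sample_cov n (X n) \<omega> j k / fnorm (p n) (sample_cov n (X n) \<omega>))"
    for n \<omega>
  have diff_eq: "norm_diff (p n) n (X n) (\<Sigma> n) \<omega> = (\<lambda>j k. Sf n \<omega> j k - \<Sigma> n j k / f n)" for n \<omega>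
    by (simp add: fun_eq_iff norm_diff_def Sf_def)
  have normalized_meas: "rho_normalized n \<in> borel_measurable (M n)" if "0 < n" for n
    by (rule iid_sample.specnorm_normalized_Shat_measurable[OF sample[OF that]])
  have diff_meas: "rho_diff n \<in> borel_measurable (M n)" if "0 < n" for n
    by (rule iid_sample.specnorm_norm_diff_measurable[OF sample[OF that]])
  show ?thesis
  proof
    assume diff: "conv_prob_zero M rho_diff"
    have "(\<lambda>n. specnorm (p n) (\<Sigma> n) / f n) \<longlonglongrightarrow> 0"
    proof (rule tendsto_zero_of_conv_prob_bound[OF prob normalized normalized_meas diff diff_meas])
      fix n :: nat and \<omega> assume n: "0 < n"
      show "0 \<le> specnorm (p n) (\<Sigma> n) / f n" using specnorm_nonneg[OF dim_pos[OF n]] f_pos[OF n] by simp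
      show "specnorm (p n) (\<Sigma> n) / f n \<le> \<bar>rho_normalized n \<omega>\<bar> + \<bar>rho_diff n \<omega>\<bar>"
        using specnorm_diff_triangle(2)[OF dim_pos[OF n] f_pos[OF n], of "\<Sigma> n" "Sf n \<omega>"]
        unfolding diff_eq Sf_def by simp
    qed
    moreover have "\<forall>\<^sub>F n in sequentially. f n \<noteq> 0"
      using eventually_gt_at_top[of 0] by eventually_elim (simp add: f_pos less_imp_neq[symmetric])
    ultimately show "(\<lambda>n. specnorm (p n) (\<Sigma> n)) \<in> o(\<lambda>n. f n)" by (intro smalloI_tendsto)
  next
    assume "(\<lambda>n. specnorm (p n) (\<Sigma> n)) \<in> o(\<lambda>n. f n)"
    hence ratio: "(\<lambda>n. specnorm (p n) (\<Sigma> n) / f n) \<longlonglongrightarrow> 0" by (rule smalloD_tendsto)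
    show "conv_prob_zero M rho_diff"
    proof (rule conv_prob_zero_dominated[OF prob normalized normalized_meas ratio])
      fix n :: nat and \<omega> assume n: "0 < n"
      show "\<bar>rho_diff n \<omega>\<bar> \<le> \<bar>rho_normalized n \<omega>\<bar> + specnorm (p n) (\<Sigma> n) / f n"
        using specnorm_diff_triangle(1)[OF dim_pos[OF n] f_pos[OF n], of "Sf n \<omega>" "\<Sigma> n"]
          specnorm_nonneg[OF dim_pos[OF n]] unfolding diff_eq Sf_def by simp
    qed
  qed
qed

end

theorem mainTheorem6:
  fixes M :: "nat \<Rightarrow> 'a measure" and p :: "nat \<Rightarrow> nat"
    and X :: "nat \<Rightarrow> nat \<Rightarrow> 'a \<Rightarrow> nat \<Rightarrow> real"
    and \<Sigma> :: "nat \<Rightarrow> nat \<Rightarrow> nat \<Rightarrow> real"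
  assumes model: "iid_model M p X \<Sigma>"
  shows
  "((\<forall>n>0. integrable (M n) (\<lambda>\<omega>. (vdot (p n) (X n 0 \<omega>) (X n 0 \<omega>))\<^sup>2)) \<and>
    (\<lambda>n. integral\<^sup>L (M n) (\<lambda>\<omega>. (vdot (p n) (X n 0 \<omega>) (X n 0 \<omega>))\<^sup>2))
       \<in> o(\<lambda>n. real n * (fnorm (p n) (\<Sigma> n))\<^sup>2)
    \<longrightarrow>
      (\<lambda>n. integral\<^sup>L (M n) (\<lambda>\<omega>. (frob (p n) (norm_diff (p n) n (X n) (\<Sigma> n) \<omega>))\<^sup>2))
         \<longlonglongrightarrow> 0
      \<and> conv_prob_zero M (\<lambda>n \<omega>. specnorm (p n) (norm_diff (p n) n (X n) (\<Sigma> n) \<omega>)))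
   \<and>
   ((\<forall>n>0. integrable (M n) (\<lambda>\<omega>. (vdot (p n) (X n 0 \<omega>) (X n 0 \<omega>))\<^sup>2)) \<and>
    (\<lambda>n. real n * (fnorm (p n) (\<Sigma> n))\<^sup>2)
       \<in> o(\<lambda>n. integral\<^sup>L (M n) (\<lambda>\<omega>. (vdot (p n) (X n 0 \<omega>) (X n 0 \<omega>))\<^sup>2)) \<and>
    (\<forall>n>0. integrable (M n) (\<lambda>\<omega>.
        ((vdot (p n) (X n 0 \<omega>) (X n 0 \<omega>) - mtrace (p n) (\<Sigma> n)) / fnorm (p n) (\<Sigma> n)) ^ 4)) \<and>
    (\<lambda>n. (integral\<^sup>L (M n) (\<lambda>\<omega>.
        ((vdot (p n) (X n 0 \<omega>) (X n 0 \<omega>) - mtrace (p n) (\<Sigma> n)) / fnorm (p n) (\<Sigma> n)) ^ 4))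
          powr (1/4))
       \<in> O(\<lambda>n. real n powr (3/4)) \<and>
    (\<forall>n>1. integrable (M n) (\<lambda>\<omega>. (vdot (p n) (X n 0 \<omega>) (X n 1 \<omega>)) ^ 4)) \<and>
    (\<lambda>n. integral\<^sup>L (M n) (\<lambda>\<omega>. (vdot (p n) (X n 0 \<omega>) (X n 1 \<omega>)) ^ 4))
       \<in> o(\<lambda>n. (integral\<^sup>L (M n) (\<lambda>\<omega>. (vdot (p n) (X n 0 \<omega>) (X n 0 \<omega>))\<^sup>2))\<^sup>2)
    \<longrightarrow>
      conv_prob_zero M (\<lambda>n \<omega>. specnorm (p n)
          (\<lambda>j k. sample_cov n (X n) \<omega> j k / fnorm (p n) (sample_cov n (X n) \<omega>)))
      \<and> (conv_prob_zero M (\<lambda>n \<omega>. specnorm (p n) (norm_diff (p n) n (X n) (\<Sigma> n) \<omega>))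
         \<longleftrightarrow> (\<lambda>n. specnorm (p n) (\<Sigma> n)) \<in> o(\<lambda>n. fnorm (p n) (\<Sigma> n))))"
proof -
  interpret iid_array M p X \<Sigma> by (rule iid_array.intro[OF model])
  show ?thesis
  proof ((rule conjI; intro impI; elim conjE), goal_cases)
    case 1
    show ?case by (intro conjI normalized_sample_cov_consistent[OF 1])
  next
    case 2
    have normalized: "conv_prob_zero M rho_normalized"
      by (rule normalized_sample_cov_specnorm_vanishes[OF 2(1-4)])
    show ?case by (intro conjI normalized norm_diff_vanishes_iff[OF normalized])
  qed
qed

end
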